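(* Let $M$ be a finite monoid. The assignment $\mathfrak m\mapsto \mathbf{Sh}(\mathcal F_{\mathfrak m})$ is a bijection from the set $\mathscr{II}(M)$ of two-sided idempotent ideals of $M$ (including $\emptyset$) onto the set $\mathfrak{Loc}(\mathscr{Sets}_M)$ of localising subcategories of the topos $\mathscr{Sets}_M$ of right $M$-sets. In particular $|\mathfrak{Loc}(\mathscr{Sets}_M)|=|\mathfrak{Loc}(\mathscr{Sets}_{M^{op}})|$ is finite.
   Context: A two-sided ideal $\mathfrak m$ is idempotent if $\mathfrak m=\mathfrak m^2:=\{xy\mid x,y\in\mathfrak m\}$. $\mathcal F_{\mathfrak m}$ is the set of right ideals of $M$ containing $\mathfrak m$; it is a Grothendieck topology on $M$ (a set $\mathcal F$ of right ideals with (T1) $M\in\mathcal F$; (T2) $\mathfrak a\in\mathcal F\Rightarrow(\mathfrak a:m)\in\mathcal F$ for all $m$, where $(\mathfrak a:m)=\{x\mid mx\in\mathfrak a\}$; (T3) if $\mathfrak b\in\mathcal F$ and $(\mathfrak a:b)\in\mathcal F$ for all $b\in\mathfrak b$ then $\mathfrak a\in\mathcal F$). A right $M$-set $X$ is an $\mathcal F$-sheaf if $X\to\mathrm{Hom}_M(\mathfrak a,X)$, $x\mapsto(y\mapsto xy)$, is bijective for all $\mathfrak a\in\mathcal F$; $\mathbf{Sh}(\mathcal F)$ is the full subcategory of sheaves. A localising subcategory of a topos $\mathscr E$ is a full, replete subcategory whose inclusion has a left adjoint preserving finite limits. *)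

theory Defs
  imports "HOL-Algebra.Group"
begin

text \<open>A right M-set is represented as a pair (carrier, action); the carrier of an
  object of the category lives in a fixed (universe) type 'u.\<close>

type_synonym ('x,'m) mobj = "'x set \<times> ('x \<Rightarrow> 'm \<Rightarrow> 'x)"

definition rmset :: "('m,'b) monoid_scheme \<Rightarrow> ('x,'m) mobj \<Rightarrow> bool" where
  "rmset M A \<longleftrightarrow>
     (\<forall>x\<in>fst A. \<forall>m\<in>carrier M. snd A x m \<in> fst A) \<and>
     (\<forall>x\<in>fst A. snd A x \<one>\<^bsub>M\<^esub> = x) \<and>
     (\<forall>x\<in>fst A. \<forall>m\<in>carrier M. \<forall>n\<in>carrier M.
         snd A x (m \<otimes>\<^bsub>M\<^esub> n) = snd A (snd A x m) n)"

definition mhom :: "('m,'b) monoid_scheme \<Rightarrow> ('x,'m) mobj \<Rightarrow> ('y,'m) mobj \<Rightarrow> ('x \<Rightarrow> 'y) \<Rightarrow> bool" where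
  "mhom M A B f \<longleftrightarrow>
     (\<forall>x\<in>fst A. f x \<in> fst B) \<and>
     (\<forall>x\<in>fst A. \<forall>m\<in>carrier M. f (snd A x m) = snd B (f x) m)"

definition miso :: "('m,'b) monoid_scheme \<Rightarrow> ('x,'m) mobj \<Rightarrow> ('y,'m) mobj \<Rightarrow> bool" where
  "miso M A B \<longleftrightarrow> (\<exists>f g. mhom M A B f \<and> mhom M B A g \<and>
       (\<forall>x\<in>fst A. g (f x) = x) \<and> (\<forall>y\<in>fst B. f (g y) = y))"

text \<open>A full replete subcategory: a class of objects closed under isomorphism
  (fullness is automatic, all morphisms between its objects are taken).\<close>
definition full_replete :: "('m,'b) monoid_scheme \<Rightarrow> ('x,'m) mobj set \<Rightarrow> bool" where
  "full_replete M L \<longleftrightarrow> L \<subseteq> {A. rmset M A} \<and>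
     (\<forall>A B. A \<in> L \<longrightarrow> rmset M B \<longrightarrow> miso M A B \<longrightarrow> B \<in> L)"

definition is_reflection :: "('m,'b) monoid_scheme \<Rightarrow> ('x,'m) mobj set
    \<Rightarrow> (('x,'m) mobj \<Rightarrow> ('x,'m) mobj) \<Rightarrow> (('x,'m) mobj \<Rightarrow> 'x \<Rightarrow> 'x) \<Rightarrow> bool" where
  "is_reflection M L R \<eta> \<longleftrightarrow> (\<forall>A. rmset M A \<longrightarrow>
     R A \<in> L \<and> mhom M A (R A) (\<eta> A) \<and>
     (\<forall>B\<in>L. \<forall>f. mhom M A B f \<longrightarrow>
        (\<exists>g. mhom M (R A) B g \<and> (\<forall>x\<in>fst A. g (\<eta> A x) = f x) \<and>
           (\<forall>g'. mhom M (R A) B g' \<and> (\<forall>x\<in>fst A. g' (\<eta> A x) = f x)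
                 \<longrightarrow> (\<forall>y\<in>fst (R A). g' y = g y)))))"

definition refl_mor :: "('m,'b) monoid_scheme \<Rightarrow> (('x,'m) mobj \<Rightarrow> ('x,'m) mobj)
    \<Rightarrow> (('x,'m) mobj \<Rightarrow> 'x \<Rightarrow> 'x) \<Rightarrow> ('x,'m) mobj \<Rightarrow> ('x,'m) mobj \<Rightarrow> ('x \<Rightarrow> 'x) \<Rightarrow> 'x \<Rightarrow> 'x" where
  "refl_mor M R \<eta> A A' h = (SOME g. mhom M (R A) (R A') g \<and>
       (\<forall>x\<in>fst A. g (\<eta> A x) = \<eta> A' (h x)))"

definition is_terminal :: "('m,'b) monoid_scheme \<Rightarrow> ('x,'m) mobj \<Rightarrow> bool" where
  "is_terminal M T \<longleftrightarrow> rmset M T \<and>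
     (\<forall>A::('x,'m) mobj. rmset M A \<longrightarrow> (\<exists>f. mhom M A T f) \<and>
        (\<forall>f g. mhom M A T f \<longrightarrow> mhom M A T g \<longrightarrow> (\<forall>x\<in>fst A. f x = g x)))"

definition is_pullback :: "('m,'b) monoid_scheme \<Rightarrow> ('x,'m) mobj \<Rightarrow> ('x \<Rightarrow> 'x) \<Rightarrow> ('x \<Rightarrow> 'x)
    \<Rightarrow> ('x,'m) mobj \<Rightarrow> ('x,'m) mobj \<Rightarrow> ('x,'m) mobj \<Rightarrow> ('x \<Rightarrow> 'x) \<Rightarrow> ('x \<Rightarrow> 'x) \<Rightarrow> bool" where
  "is_pullback M P p1 p2 A B C f g \<longleftrightarrow>
     rmset M P \<and> rmset M A \<and> rmset M B \<and> rmset M C \<and>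
     mhom M P A p1 \<and> mhom M P B p2 \<and> mhom M A C f \<and> mhom M B C g \<and>
     (\<forall>x\<in>fst P. f (p1 x) = g (p2 x)) \<and>
     (\<forall>(Q::('x,'m) mobj) q1 q2. rmset M Q \<and> mhom M Q A q1 \<and> mhom M Q B q2 \<and>
          (\<forall>x\<in>fst Q. f (q1 x) = g (q2 x)) \<longrightarrow>
        (\<exists>u. mhom M Q P u \<and> (\<forall>x\<in>fst Q. p1 (u x) = q1 x \<and> p2 (u x) = q2 x) \<and>
           (\<forall>u'. mhom M Q P u' \<and> (\<forall>x\<in>fst Q. p1 (u' x) = q1 x \<and> p2 (u' x) = q2 x)
                 \<longrightarrow> (\<forall>x\<in>fst Q. u' x = u x))))"

text \<open>Localising subcategory: full, replete, and the inclusion has a left adjoint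
  preserving finite limits (= preserving the terminal object and pullbacks).\<close>
definition localising :: "('m,'b) monoid_scheme \<Rightarrow> ('x,'m) mobj set \<Rightarrow> bool" where
  "localising M L \<longleftrightarrow> full_replete M L \<and>
     (\<exists>R \<eta>. is_reflection M L R \<eta> \<and>
        (\<forall>T. is_terminal M T \<longrightarrow> is_terminal M (R T)) \<and>
        (\<forall>P p1 p2 A B C f g. is_pullback M P p1 p2 A B C f g \<longrightarrow>
            is_pullback M (R P) (refl_mor M R \<eta> P A p1) (refl_mor M R \<eta> P B p2)
              (R A) (R B) (R C) (refl_mor M R \<eta> A C f) (refl_mor M R \<eta> B C g)))"

definition Loc :: "('m,'b) monoid_scheme \<Rightarrow> ('x,'m) mobj set set" where
  "Loc M = {L. localising M L}"

definition right_ideal :: "('m,'b) monoid_scheme \<Rightarrow> 'm set \<Rightarrow> bool" where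
  "right_ideal M a \<longleftrightarrow> a \<subseteq> carrier M \<and> (\<forall>x\<in>a. \<forall>m\<in>carrier M. x \<otimes>\<^bsub>M\<^esub> m \<in> a)"

definition two_sided_ideal :: "('m,'b) monoid_scheme \<Rightarrow> 'm set \<Rightarrow> bool" where
  "two_sided_ideal M a \<longleftrightarrow> right_ideal M a \<and> (\<forall>x\<in>a. \<forall>m\<in>carrier M. m \<otimes>\<^bsub>M\<^esub> x \<in> a)"

definition idem_ideals :: "('m,'b) monoid_scheme \<Rightarrow> 'm set set" where
  "idem_ideals M = {a. two_sided_ideal M a \<and> a = {x \<otimes>\<^bsub>M\<^esub> y | x y. x \<in> a \<and> y \<in> a}}"

definition topF :: "('m,'b) monoid_scheme \<Rightarrow> 'm set \<Rightarrow> 'm set set" where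
  "topF M m = {a. right_ideal M a \<and> m \<subseteq> a}"

text \<open>F-sheaves: X \<rightarrow> Hom_M(a, X), x \<mapsto> (y \<mapsto> xy), bijective for all a \<in> F
  (morphisms compared extensionally on a).\<close>
definition is_sheaf :: "('m,'b) monoid_scheme \<Rightarrow> 'm set set \<Rightarrow> ('x,'m) mobj \<Rightarrow> bool" where
  "is_sheaf M F A \<longleftrightarrow> rmset M A \<and> (\<forall>a\<in>F.
     (\<forall>x\<in>fst A. \<forall>x'\<in>fst A. (\<forall>y\<in>a. snd A x y = snd A x' y) \<longrightarrow> x = x') \<and>
     (\<forall>\<phi>. mhom M (a, mult M) A \<phi> \<longrightarrow> (\<exists>x\<in>fst A. \<forall>y\<in>a. \<phi> y = snd A x y)))"

definition Sh :: "('m,'b) monoid_scheme \<Rightarrow> 'm set set \<Rightarrow> ('x,'m) mobj set" where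
  "Sh M F = {A. is_sheaf M F A}"

definition opm :: "('m,'b) monoid_scheme \<Rightarrow> ('m,'b) monoid_scheme" where
  "opm M = M\<lparr>mult := (\<lambda>x y. y \<otimes>\<^bsub>M\<^esub> x)\<rparr>"

end

theory Submission
  imports Defs
begin

text \<open>
  For an idempotent ideal m every right ideal containing m is covered by m itself, so the
  F_m-sheaves are the M-sets that are separated and satisfy gluing along m alone. Since m = m m,
  the M-set Hom(m, A) is always separated and Hom(m, Hom(m, A)) is a sheaf; this double plus
  construction is the sheafification, and as Hom(m, -) preserves pullbacks and the terminal
  object, Sh(F_m) is localising.

  Conversely, let L be localising with reflector R and call a right ideal a dense when the unit of
  R M lies in the image of R a. Because R preserves pullbacks, dense ideals satisfy the axioms of a
  Grothendieck topology; M being finite, there is a least dense ideal m, which is two-sided and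
  idempotent, and L = Sh(F_m). Injectivity comes from the Rees quotient M/J: sheafifying it for m
  identifies the classes of 1 and J, which forces m \<subseteq> J whenever Sh(F_m) \<subseteq> Sh(F_J).
  The count for the opposite monoid agrees because M and M^op have the same idempotent ideals.
\<close>

section \<open>Right M-sets\<close>

lemma rmsetD:
  assumes "rmset M A"
  shows "\<And>x m. x \<in> fst A \<Longrightarrow> m \<in> carrier M \<Longrightarrow> snd A x m \<in> fst A"
    and "\<And>x. x \<in> fst A \<Longrightarrow> snd A x \<one>\<^bsub>M\<^esub> = x"
    and "\<And>x m n. x \<in> fst A \<Longrightarrow> m \<in> carrier M \<Longrightarrow> n \<in> carrier M \<Longrightarrow>
         snd A x (m \<otimes>\<^bsub>M\<^esub> n) = snd A (snd A x m) n"
  using assms unfolding rmset_def by blast+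

lemma mhomD:
  assumes "mhom M A B f"
  shows "\<And>x. x \<in> fst A \<Longrightarrow> f x \<in> fst B"
    and "\<And>x m. x \<in> fst A \<Longrightarrow> m \<in> carrier M \<Longrightarrow> f (snd A x m) = snd B (f x) m"
  using assms unfolding mhom_def by blast+

lemma mhom_comp: "mhom M A B f \<Longrightarrow> mhom M B C g \<Longrightarrow> mhom M A C (\<lambda>x. g (f x))"
  unfolding mhom_def by auto

lemma mhom_id: "rmset M A \<Longrightarrow> mhom M A A (\<lambda>x. x)"
  unfolding mhom_def rmset_def by auto

lemma mhom_cong:
  "rmset M A \<Longrightarrow> mhom M A B f \<Longrightarrow> (\<And>x. x \<in> fst A \<Longrightarrow> f x = g x) \<Longrightarrow> mhom M A B g"
  unfolding mhom_def rmset_def by auto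

lemma mhom_into_superset:
  "mhom M X Z g \<Longrightarrow> fst Z \<subseteq> fst Y \<Longrightarrow> snd Z = snd Y \<Longrightarrow> mhom M X Y g"
  unfolding mhom_def by auto

lemma rmset_carrier: "monoid M \<Longrightarrow> rmset M (carrier M, mult M)"
  unfolding rmset_def by (simp add: monoid.m_closed monoid.r_one monoid.m_assoc)

lemma rmset_miso:
  assumes iso: "miso M A B" and A: "rmset M A" and M: "monoid M"
  shows "rmset M B"
proof -
  obtain f g where f: "mhom M A B f" and g: "mhom M B A g"
    and gf: "\<forall>x\<in>fst A. g (f x) = x" and fg: "\<forall>y\<in>fst B. f (g y) = y"
    using iso unfolding miso_def by blast
  have act: "\<And>y m. y \<in> fst B \<Longrightarrow> m \<in> carrier M \<Longrightarrow> snd B y m = f (snd A (g y) m)"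
    by (metis fg f g mhomD)
  have closed: "snd B y m \<in> fst B" if "y \<in> fst B" "m \<in> carrier M" for y m
    using that act mhomD(1)[OF f] rmsetD(1)[OF A] mhomD(1)[OF g] by simp
  show ?thesis unfolding rmset_def
  proof (intro conjI ballI closed)
    fix y assume y: "y \<in> fst B"
    show "snd B y \<one>\<^bsub>M\<^esub> = y"
      using act[OF y monoid.one_closed[OF M]] rmsetD(2)[OF A] mhomD(1)[OF g y] fg y by simp
  next
    fix y m n assume y: "y \<in> fst B" and m: "m \<in> carrier M" and n: "n \<in> carrier M"
    have gym: "g (snd B y m) = snd A (g y) m"
      using act[OF y m] gf rmsetD(1)[OF A] mhomD(1)[OF g y] m by simp
    have "snd B y (m \<otimes>\<^bsub>M\<^esub> n) = f (snd A (snd A (g y) m) n)"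
      using act[OF y monoid.m_closed[OF M m n]] rmsetD(3)[OF A] mhomD(1)[OF g y] m n by simp
    also have "\<dots> = snd B (snd B y m) n"
      using act[OF closed[OF y m] n] gym by simp
    finally show "snd B y (m \<otimes>\<^bsub>M\<^esub> n) = snd B (snd B y m) n" .
  qed
qed

text \<open>Objects of the category live in a fixed type, so auxiliary M-sets built on other types
  are copied into it along an injection.\<close>

definition transport :: "('x \<Rightarrow> 'y) \<Rightarrow> ('x,'m) mobj \<Rightarrow> ('y,'m) mobj" where
  "transport f A = (f ` fst A, \<lambda>u s. f (snd A (inv_into (fst A) f u) s))"

lemma fst_transport [simp]: "fst (transport f A) = f ` fst A"
  by (simp add: transport_def)

lemma transport_act:
  "inj_on f (fst A) \<Longrightarrow> x \<in> fst A \<Longrightarrow> snd (transport f A) (f x) s = f (snd A x s)"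
  by (simp add: transport_def)

lemma mhom_transport: "inj_on f (fst A) \<Longrightarrow> rmset M A \<Longrightarrow> mhom M A (transport f A) f"
  unfolding mhom_def by (simp add: transport_act)

lemma mhom_transport_inv:
  "inj_on f (fst A) \<Longrightarrow> rmset M A \<Longrightarrow> mhom M (transport f A) A (inv_into (fst A) f)"
  unfolding mhom_def by (auto simp: transport_act dest: rmsetD(1))

lemma miso_transport: "inj_on f (fst A) \<Longrightarrow> rmset M A \<Longrightarrow> miso M A (transport f A)"
  unfolding miso_def
  by (intro exI[of _ f] exI[of _ "inv_into (fst A) f"])
     (simp add: mhom_transport mhom_transport_inv)

lemma rmset_transport: "inj_on f (fst A) \<Longrightarrow> rmset M A \<Longrightarrow> monoid M \<Longrightarrow> rmset M (transport f A)"
  using miso_transport rmset_miso by blast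

definition transport_map :: "('x \<Rightarrow> 'y) \<Rightarrow> ('x,'m) mobj \<Rightarrow> ('x \<Rightarrow> 'x) \<Rightarrow> 'y \<Rightarrow> 'y" where
  "transport_map e X h = (\<lambda>y. e (h (inv_into (fst X) e y)))"

lemma transport_map_apply:
  "inj_on e (fst X) \<Longrightarrow> x \<in> fst X \<Longrightarrow> transport_map e X h (e x) = e (h x)"
  unfolding transport_map_def by simp

lemma mhom_transport_map:
  assumes eX: "inj_on e (fst X)" and eY: "inj_on e (fst Y)" and X: "rmset M X"
    and h: "mhom M X Y h"
  shows "mhom M (transport e X) (transport e Y) (transport_map e X h)"
  unfolding mhom_def fst_transport
proof (intro conjI ballI)
  fix u assume "u \<in> e ` fst X"
  then obtain x where x: "x \<in> fst X" "u = e x" by blast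
  show "transport_map e X h u \<in> e ` fst Y"
    using x transport_map_apply[OF eX] mhomD(1)[OF h] by simp
next
  fix u s assume "u \<in> e ` fst X" and s: "s \<in> carrier M"
  then obtain x where x: "x \<in> fst X" "u = e x" by blast
  show "transport_map e X h (snd (transport e X) u s) = snd (transport e Y) (transport_map e X h u) s"
    using x transport_act[OF eX x(1)] transport_map_apply[OF eX x(1)]
      transport_map_apply[OF eX rmsetD(1)[OF X x(1) s]] transport_act[OF eY mhomD(1)[OF h x(1)]]
      mhomD(2)[OF h x(1) s]
    by simp
qed

lemma is_sheaf_miso:
  assumes iso: "miso M A B" and sh: "is_sheaf M F A" and M: "monoid M"
    and F: "\<forall>a\<in>F. a \<subseteq> carrier M"
  shows "is_sheaf M F B"
proof -
  obtain f g where f: "mhom M A B f" and g: "mhom M B A g"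
    and fg: "\<forall>y\<in>fst B. f (g y) = y"
    using iso unfolding miso_def by blast
  have A: "rmset M A" using sh unfolding is_sheaf_def by blast
  have sep: "\<And>a x x'. a \<in> F \<Longrightarrow> x \<in> fst A \<Longrightarrow> x' \<in> fst A \<Longrightarrow>
      (\<forall>y\<in>a. snd A x y = snd A x' y) \<Longrightarrow> x = x'"
    and ext: "\<And>a \<phi>. a \<in> F \<Longrightarrow> mhom M (a, mult M) A \<phi> \<Longrightarrow> \<exists>x\<in>fst A. \<forall>y\<in>a. \<phi> y = snd A x y"
    using sh unfolding is_sheaf_def by blast+
  show ?thesis unfolding is_sheaf_def
  proof (intro conjI rmset_miso[OF iso A M] ballI allI impI)
    fix a x x' assume a: "a \<in> F" and x: "x \<in> fst B" and x': "x' \<in> fst B"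
      and eq: "\<forall>y\<in>a. snd B x y = snd B x' y"
    have "snd A (g x) y = snd A (g x') y" if y: "y \<in> a" for y
    proof -
      have yM: "y \<in> carrier M" using y a F by blast
      show ?thesis using mhomD(2)[OF g x yM] mhomD(2)[OF g x' yM] eq y by simp
    qed
    hence "g x = g x'" using sep[OF a] mhomD(1)[OF g] x x' by blast
    thus "x = x'" using fg x x' by metis
  next
    fix a \<phi> assume a: "a \<in> F" and ph: "mhom M (a, mult M) B \<phi>"
    obtain x0 where x0: "x0 \<in> fst A" and hx: "\<forall>y\<in>a. g (\<phi> y) = snd A x0 y"
      using ext[OF a mhom_comp[OF ph g]] by blast
    have "\<phi> y = snd B (f x0) y" if y: "y \<in> a" for y
    proof -
      have yM: "y \<in> carrier M" using y a F by blast
      have "\<phi> y = f (g (\<phi> y))" using fg mhomD(1)[OF ph] y by simp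
      thus ?thesis using hx y mhomD(2)[OF f x0 yM] by simp
    qed
    thus "\<exists>x\<in>fst B. \<forall>y\<in>a. \<phi> y = snd B x y" using mhomD(1)[OF f x0] by blast
  qed
qed

definition regular :: "('m,'b) monoid_scheme \<Rightarrow> ('m \<Rightarrow> 'x) \<Rightarrow> ('x,'m) mobj" where
  "regular M e = transport e (carrier M, mult M)"

definition orbit_map :: "('m,'b) monoid_scheme \<Rightarrow> ('m \<Rightarrow> 'x) \<Rightarrow> ('y,'m) mobj \<Rightarrow> 'y \<Rightarrow> 'x \<Rightarrow> 'y" where
  "orbit_map M e B b u = snd B b (inv_into (carrier M) e u)"

lemma rmset_regular: "monoid M \<Longrightarrow> inj_on e (carrier M) \<Longrightarrow> rmset M (regular M e)"
  unfolding regular_def by (rule rmset_transport) (simp_all add: rmset_carrier)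

lemma fst_regular: "fst (regular M e) = e ` carrier M"
  by (simp add: regular_def)

lemma regular_act:
  "inj_on e (carrier M) \<Longrightarrow> s \<in> carrier M \<Longrightarrow> snd (regular M e) (e s) t = e (s \<otimes>\<^bsub>M\<^esub> t)"
  unfolding regular_def by (simp add: transport_act)

lemma orbit_map_apply:
  "inj_on e (carrier M) \<Longrightarrow> s \<in> carrier M \<Longrightarrow> orbit_map M e B b (e s) = snd B b s"
  unfolding orbit_map_def by simp

lemma orbit_map_one:
  "monoid M \<Longrightarrow> inj_on e (carrier M) \<Longrightarrow> rmset M B \<Longrightarrow> b \<in> fst B \<Longrightarrow>
    orbit_map M e B b (e \<one>\<^bsub>M\<^esub>) = b"
  by (simp add: orbit_map_apply monoid.one_closed rmsetD(2))

lemma mhom_orbit_map: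
  assumes M: "monoid M" and e: "inj_on e (carrier M)" and B: "rmset M B" and b: "b \<in> fst B"
  shows "mhom M (regular M e) B (orbit_map M e B b)"
  unfolding mhom_def fst_regular
proof (intro conjI ballI)
  fix u assume "u \<in> e ` carrier M"
  then obtain s where "s \<in> carrier M" "u = e s" by blast
  thus "orbit_map M e B b u \<in> fst B" by (simp add: orbit_map_apply[OF e] rmsetD(1)[OF B b])
next
  fix u t assume "u \<in> e ` carrier M" and t: "t \<in> carrier M"
  then obtain s where s: "s \<in> carrier M" "u = e s" by blast
  have "orbit_map M e B b (snd (regular M e) u t) = snd B b (s \<otimes>\<^bsub>M\<^esub> t)"
    using s regular_act[OF e s(1)] orbit_map_apply[OF e monoid.m_closed[OF M s(1) t]] by simp
  moreover have "orbit_map M e B b u = snd B b s" using s orbit_map_apply[OF e s(1)] by simp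
  ultimately show "orbit_map M e B b (snd (regular M e) u t) = snd B (orbit_map M e B b u) t"
    using rmsetD(3)[OF B b s(1) t] by simp
qed

lemma regular_hom_eqI:
  assumes M: "monoid M" and e: "inj_on e (carrier M)"
    and h: "mhom M (regular M e) B h" and h': "mhom M (regular M e) B h'"
    and eq: "h (e \<one>\<^bsub>M\<^esub>) = h' (e \<one>\<^bsub>M\<^esub>)" and u: "u \<in> fst (regular M e)"
  shows "h u = h' u"
proof -
  obtain s where s: "s \<in> carrier M" "u = e s" using u by (auto simp: fst_regular)
  have one: "e \<one>\<^bsub>M\<^esub> \<in> fst (regular M e)" by (simp add: fst_regular monoid.one_closed[OF M])
  have "u = snd (regular M e) (e \<one>\<^bsub>M\<^esub>) s"
    using s regular_act[OF e monoid.one_closed[OF M]] monoid.l_one[OF M] by simp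
  thus ?thesis using mhomD(2)[OF h one s(1)] mhomD(2)[OF h' one s(1)] eq by simp
qed

section \<open>Finite limits of M-sets\<close>

definition concrete_pullback :: "('m,'b) monoid_scheme \<Rightarrow> ('x,'m) mobj \<Rightarrow> ('x \<Rightarrow> 'x) \<Rightarrow> ('x \<Rightarrow> 'x)
    \<Rightarrow> ('x,'m) mobj \<Rightarrow> ('x,'m) mobj \<Rightarrow> ('x,'m) mobj \<Rightarrow> ('x \<Rightarrow> 'x) \<Rightarrow> ('x \<Rightarrow> 'x) \<Rightarrow> bool" where
  "concrete_pullback M P p1 p2 A B C f g \<longleftrightarrow>
     rmset M P \<and> rmset M A \<and> rmset M B \<and> rmset M C \<and>
     mhom M P A p1 \<and> mhom M P B p2 \<and> mhom M A C f \<and> mhom M B C g \<and>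
     (\<forall>x\<in>fst P. f (p1 x) = g (p2 x)) \<and>
     (\<forall>x\<in>fst P. \<forall>x'\<in>fst P. p1 x = p1 x' \<and> p2 x = p2 x' \<longrightarrow> x = x') \<and>
     (\<forall>a\<in>fst A. \<forall>b\<in>fst B. f a = g b \<longrightarrow> (\<exists>x\<in>fst P. p1 x = a \<and> p2 x = b))"

lemma concrete_pullbackD:
  assumes "concrete_pullback M P p1 p2 A B C f g"
  shows "rmset M P" "rmset M A" "rmset M B" "rmset M C"
    "mhom M P A p1" "mhom M P B p2" "mhom M A C f" "mhom M B C g"
    "\<And>x. x \<in> fst P \<Longrightarrow> f (p1 x) = g (p2 x)"
    "\<And>x x'. x \<in> fst P \<Longrightarrow> x' \<in> fst P \<Longrightarrow> p1 x = p1 x' \<Longrightarrow> p2 x = p2 x' \<Longrightarrow> x = x'"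
    "\<And>a b. a \<in> fst A \<Longrightarrow> b \<in> fst B \<Longrightarrow> f a = g b \<Longrightarrow> \<exists>x\<in>fst P. p1 x = a \<and> p2 x = b"
  using assms unfolding concrete_pullback_def by blast+

lemma is_pullbackD:
  fixes M :: "('m,'b) monoid_scheme" and P :: "('x,'m) mobj"
  assumes "is_pullback M P p1 p2 A B C f g"
  shows "rmset M P" "rmset M A" "rmset M B" "rmset M C"
    "mhom M P A p1" "mhom M P B p2" "mhom M A C f" "mhom M B C g"
    "\<And>x. x \<in> fst P \<Longrightarrow> f (p1 x) = g (p2 x)"
    "\<And>(Q::('x,'m) mobj) q1 q2. rmset M Q \<Longrightarrow> mhom M Q A q1 \<Longrightarrow>
       mhom M Q B q2 \<Longrightarrow> (\<forall>x\<in>fst Q. f (q1 x) = g (q2 x)) \<Longrightarrow>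
       \<exists>u. mhom M Q P u \<and> (\<forall>x\<in>fst Q. p1 (u x) = q1 x \<and> p2 (u x) = q2 x) \<and>
         (\<forall>u'. mhom M Q P u' \<and> (\<forall>x\<in>fst Q. p1 (u' x) = q1 x \<and> p2 (u' x) = q2 x)
               \<longrightarrow> (\<forall>x\<in>fst Q. u' x = u x))"
  using assms unfolding is_pullback_def by blast+

lemma concrete_pullback_is_pullback:
  fixes M :: "('m,'b) monoid_scheme" and P :: "('x,'m) mobj"
  assumes pb: "concrete_pullback M P p1 p2 A B C f g"
  shows "is_pullback M P p1 p2 A B C f g"
proof -
  note pbD = concrete_pullbackD[OF pb]
  have "\<exists>u. mhom M Q P u \<and> (\<forall>x\<in>fst Q. p1 (u x) = q1 x \<and> p2 (u x) = q2 x) \<and>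
           (\<forall>u'. mhom M Q P u' \<and> (\<forall>x\<in>fst Q. p1 (u' x) = q1 x \<and> p2 (u' x) = q2 x)
                 \<longrightarrow> (\<forall>x\<in>fst Q. u' x = u x))"
    if Q: "rmset M Q" and q1: "mhom M Q A q1" and q2: "mhom M Q B q2"
      and c: "\<forall>x\<in>fst Q. f (q1 x) = g (q2 x)" for Q :: "('x,'m) mobj" and q1 q2
  proof -
    define u where "u y = (SOME x. x \<in> fst P \<and> p1 x = q1 y \<and> p2 x = q2 y)" for y
    have up: "u y \<in> fst P \<and> p1 (u y) = q1 y \<and> p2 (u y) = q2 y" if y: "y \<in> fst Q" for y
      unfolding u_def
      by (rule someI_ex) (use pbD(11)[OF mhomD(1)[OF q1 y] mhomD(1)[OF q2 y]] c y in blast)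
    have "mhom M Q P u"
      unfolding mhom_def
    proof (intro conjI ballI)
      fix y s assume y: "y \<in> fst Q" and s: "s \<in> carrier M"
      show "u (snd Q y s) = snd P (u y) s"
      proof (rule pbD(10))
        show "u (snd Q y s) \<in> fst P" "snd P (u y) s \<in> fst P"
          using up[OF rmsetD(1)[OF Q y s]] rmsetD(1)[OF pbD(1) _ s] up[OF y] by blast+
        show "p1 (u (snd Q y s)) = p1 (snd P (u y) s)" "p2 (u (snd Q y s)) = p2 (snd P (u y) s)"
          using up[OF rmsetD(1)[OF Q y s]] up[OF y] mhomD(2)[OF pbD(5) _ s] mhomD(2)[OF pbD(6) _ s]
            mhomD(2)[OF q1 y s] mhomD(2)[OF q2 y s] by simp_all
      qed
    qed (use up in blast)
    moreover have "u' x = u x"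
      if "mhom M Q P u'" "\<forall>x\<in>fst Q. p1 (u' x) = q1 x \<and> p2 (u' x) = q2 x" "x \<in> fst Q" for u' x
      using pbD(10)[OF mhomD(1)[OF that(1,3)] conjunct1[OF up[OF that(3)]]] that(2,3) up[OF that(3)]
      by auto
    ultimately show ?thesis using up by blast
  qed
  thus ?thesis using pbD(1-9) unfolding is_pullback_def by blast
qed

text \<open>Elements of P correspond to morphisms out of the regular M-set, so the universal property
  of a pullback makes it a fibre product; this needs a copy of M inside the universe.\<close>

lemma is_pullback_jointly_inj:
  fixes P :: "('x,'m) mobj" and e :: "'m \<Rightarrow> 'x"
  assumes M: "monoid M" and e: "inj_on e (carrier M)"
    and pb: "is_pullback M P p1 p2 A B C f g"
    and x: "x \<in> fst P" and x': "x' \<in> fst P" and eq1: "p1 x = p1 x'" and eq2: "p2 x = p2 x'"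
  shows "x = x'"
proof -
  note pbD = is_pullbackD[OF pb]
  let ?Q = "regular M e" and ?u = "orbit_map M e P x" and ?u' = "orbit_map M e P x'"
  have u: "mhom M ?Q P ?u" and u': "mhom M ?Q P ?u'"
    using mhom_orbit_map[OF M e pbD(1) x] mhom_orbit_map[OF M e pbD(1) x'] .
  have one: "e \<one>\<^bsub>M\<^esub> \<in> fst ?Q" by (simp add: fst_regular monoid.one_closed[OF M])
  have at_one: "p1 (?u' (e \<one>\<^bsub>M\<^esub>)) = p1 (?u (e \<one>\<^bsub>M\<^esub>))"
    "p2 (?u' (e \<one>\<^bsub>M\<^esub>)) = p2 (?u (e \<one>\<^bsub>M\<^esub>))"
    using orbit_map_one[OF M e pbD(1)] x x' eq1 eq2 by simp_all
  have same: "\<forall>y\<in>fst ?Q. p1 (?u' y) = p1 (?u y) \<and> p2 (?u' y) = p2 (?u y)"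
  proof
    fix y assume y: "y \<in> fst ?Q"
    show "p1 (?u' y) = p1 (?u y) \<and> p2 (?u' y) = p2 (?u y)"
      using regular_hom_eqI[OF M e mhom_comp[OF u' pbD(5)] mhom_comp[OF u pbD(5)] at_one(1) y]
        regular_hom_eqI[OF M e mhom_comp[OF u' pbD(6)] mhom_comp[OF u pbD(6)] at_one(2) y] by simp
  qed
  obtain w where w: "\<forall>u''. mhom M ?Q P u'' \<and>
      (\<forall>y\<in>fst ?Q. p1 (u'' y) = p1 (?u y) \<and> p2 (u'' y) = p2 (?u y)) \<longrightarrow> (\<forall>y\<in>fst ?Q. u'' y = w y)"
    using pbD(10)[OF rmset_regular[OF M e] mhom_comp[OF u pbD(5)] mhom_comp[OF u pbD(6)]]
      pbD(9) mhomD(1)[OF u] by blast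
  have "\<forall>y\<in>fst ?Q. ?u y = w y" "\<forall>y\<in>fst ?Q. ?u' y = w y" using w u u' same by blast+
  hence "?u (e \<one>\<^bsub>M\<^esub>) = ?u' (e \<one>\<^bsub>M\<^esub>)" using one by simp
  thus "x = x'" using orbit_map_one[OF M e pbD(1)] x x' by simp
qed

lemma is_pullback_jointly_surj:
  fixes P :: "('x,'m) mobj" and e :: "'m \<Rightarrow> 'x"
  assumes M: "monoid M" and e: "inj_on e (carrier M)"
    and pb: "is_pullback M P p1 p2 A B C f g"
    and a: "a \<in> fst A" and b: "b \<in> fst B" and ab: "f a = g b"
  shows "\<exists>x\<in>fst P. p1 x = a \<and> p2 x = b"
proof -
  note pbD = is_pullbackD[OF pb]
  let ?Q = "regular M e" and ?qa = "orbit_map M e A a" and ?qb = "orbit_map M e B b"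
  have qa: "mhom M ?Q A ?qa" and qb: "mhom M ?Q B ?qb"
    using mhom_orbit_map[OF M e pbD(2) a] mhom_orbit_map[OF M e pbD(3) b] .
  have one: "e \<one>\<^bsub>M\<^esub> \<in> fst ?Q" by (simp add: fst_regular monoid.one_closed[OF M])
  have qa1: "?qa (e \<one>\<^bsub>M\<^esub>) = a" and qb1: "?qb (e \<one>\<^bsub>M\<^esub>) = b"
    using orbit_map_one[OF M e pbD(2) a] orbit_map_one[OF M e pbD(3) b] .
  have at_one: "f (?qa (e \<one>\<^bsub>M\<^esub>)) = g (?qb (e \<one>\<^bsub>M\<^esub>))" using qa1 qb1 ab by simp
  have "\<forall>y\<in>fst ?Q. f (?qa y) = g (?qb y)"
  proof
    fix y assume "y \<in> fst ?Q"
    from regular_hom_eqI[OF M e mhom_comp[OF qa pbD(7)] mhom_comp[OF qb pbD(8)] at_one this]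
    show "f (?qa y) = g (?qb y)" .
  qed
  then obtain w where w: "mhom M ?Q P w" and wp: "\<forall>y\<in>fst ?Q. p1 (w y) = ?qa y \<and> p2 (w y) = ?qb y"
    using pbD(10)[OF rmset_regular[OF M e] qa qb] by blast
  have "p1 (w (e \<one>\<^bsub>M\<^esub>)) = a" "p2 (w (e \<one>\<^bsub>M\<^esub>)) = b"
    using wp one qa1 qb1 by simp_all
  thus ?thesis using mhomD(1)[OF w one] by blast
qed

lemma is_pullback_iff_concrete:
  fixes P :: "('x,'m) mobj" and e :: "'m \<Rightarrow> 'x"
  assumes M: "monoid M" and e: "inj_on e (carrier M)"
  shows "is_pullback M P p1 p2 A B C f g \<longleftrightarrow> concrete_pullback M P p1 p2 A B C f g"
proof
  assume pb: "is_pullback M P p1 p2 A B C f g"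
  show "concrete_pullback M P p1 p2 A B C f g"
    unfolding concrete_pullback_def
    using is_pullbackD(1-9)[OF pb] is_pullback_jointly_inj[OF M e pb]
      is_pullback_jointly_surj[OF M e pb] by blast
qed (rule concrete_pullback_is_pullback)

lemma is_terminal_iff_singleton:
  fixes T :: "('x,'m) mobj" and e :: "'m \<Rightarrow> 'x"
  assumes M: "monoid M" and e: "inj_on e (carrier M)"
  shows "is_terminal M T \<longleftrightarrow> rmset M T \<and> (\<exists>t. fst T = {t})"
proof
  assume tm: "is_terminal M T"
  hence T: "rmset M T" unfolding is_terminal_def by blast
  let ?Q = "regular M e"
  have one: "e \<one>\<^bsub>M\<^esub> \<in> fst ?Q" by (simp add: fst_regular monoid.one_closed[OF M])
  obtain f where f: "mhom M ?Q T f"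
    using tm rmset_regular[OF M e] unfolding is_terminal_def by blast
  have un: "\<forall>f g. mhom M ?Q T f \<longrightarrow> mhom M ?Q T g \<longrightarrow> (\<forall>x\<in>fst ?Q. f x = g x)"
    using tm rmset_regular[OF M e] unfolding is_terminal_def by blast
  have "t = f (e \<one>\<^bsub>M\<^esub>)" if t: "t \<in> fst T" for t
  proof -
    have "orbit_map M e T t (e \<one>\<^bsub>M\<^esub>) = f (e \<one>\<^bsub>M\<^esub>)"
      using un f one mhom_orbit_map[OF M e T t] by blast
    thus ?thesis using orbit_map_one[OF M e T t] by simp
  qed
  hence "fst T = {f (e \<one>\<^bsub>M\<^esub>)}" using mhomD(1)[OF f one] by blast
  thus "rmset M T \<and> (\<exists>t. fst T = {t})" using T by blast
next
  assume "rmset M T \<and> (\<exists>t. fst T = {t})"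
  then obtain t where t: "fst T = {t}" and T: "rmset M T" by blast
  have "mhom M A T (\<lambda>_. t)" for A :: "('x,'m) mobj"
    unfolding mhom_def using t rmsetD(1)[OF T] by simp
  moreover have "\<forall>x\<in>fst A. f x = g x" if "mhom M A T f" "mhom M A T g" for A :: "('x,'m) mobj" and f g
    using that t mhomD(1) by (metis singletonD)
  ultimately show "is_terminal M T" unfolding is_terminal_def using T by blast
qed

lemma concrete_pullback_cong:
  assumes pb: "concrete_pullback M P p1 p2 A B C f g"
    and p1: "\<And>x. x \<in> fst P \<Longrightarrow> p1' x = p1 x" and p2: "\<And>x. x \<in> fst P \<Longrightarrow> p2' x = p2 x"
    and f: "\<And>x. x \<in> fst A \<Longrightarrow> f' x = f x" and g: "\<And>x. x \<in> fst B \<Longrightarrow> g' x = g x"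
  shows "concrete_pullback M P p1' p2' A B C f' g'"
proof -
  note pbD = concrete_pullbackD[OF pb]
  have "mhom M P A p1'" "mhom M P B p2'" "mhom M A C f'" "mhom M B C g'"
    using mhom_cong[OF pbD(1) pbD(5)] mhom_cong[OF pbD(1) pbD(6)] mhom_cong[OF pbD(2) pbD(7)]
      mhom_cong[OF pbD(3) pbD(8)] p1 p2 f g by simp_all
  moreover have "\<forall>x\<in>fst P. f' (p1' x) = g' (p2' x)"
    using pbD(9) p1 p2 f g mhomD(1)[OF pbD(5)] mhomD(1)[OF pbD(6)] by simp
  moreover have "\<forall>x\<in>fst P. \<forall>x'\<in>fst P. p1' x = p1' x' \<and> p2' x = p2' x' \<longrightarrow> x = x'"
    using pb p1 p2 unfolding concrete_pullback_def by simp
  moreover have "\<forall>a\<in>fst A. \<forall>b\<in>fst B. f' a = g' b \<longrightarrow> (\<exists>x\<in>fst P. p1' x = a \<and> p2' x = b)"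
    using pb p1 p2 f g unfolding concrete_pullback_def by simp
  ultimately show ?thesis using pbD(1-4) unfolding concrete_pullback_def by blast
qed

lemma concrete_pullback_transport:
  assumes pb: "concrete_pullback M P p1 p2 A B C f g" and M: "monoid M"
    and eP: "inj_on e (fst P)" and eA: "inj_on e (fst A)" and eB: "inj_on e (fst B)"
    and eC: "inj_on e (fst C)"
  shows "concrete_pullback M (transport e P) (transport_map e P p1) (transport_map e P p2)
    (transport e A) (transport e B) (transport e C) (transport_map e A f) (transport_map e B g)"
proof -
  note pbD = concrete_pullbackD[OF pb]
  note app = transport_map_apply
  have comm: "\<forall>u\<in>fst (transport e P).
      transport_map e A f (transport_map e P p1 u) = transport_map e B g (transport_map e P p2 u)"
  proof
    fix u assume "u \<in> fst (transport e P)"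
    then obtain x where x: "x \<in> fst P" "u = e x" by auto
    show "transport_map e A f (transport_map e P p1 u) = transport_map e B g (transport_map e P p2 u)"
      using x app[OF eP x(1)] app[OF eA mhomD(1)[OF pbD(5) x(1)]] app[OF eB mhomD(1)[OF pbD(6) x(1)]]
        pbD(9)[OF x(1)] by simp
  qed
  have inj: "\<forall>u\<in>fst (transport e P). \<forall>u'\<in>fst (transport e P).
      transport_map e P p1 u = transport_map e P p1 u' \<and> transport_map e P p2 u = transport_map e P p2 u'
      \<longrightarrow> u = u'"
  proof (intro ballI impI)
    fix u u' assume "u \<in> fst (transport e P)" "u' \<in> fst (transport e P)"
      and eq: "transport_map e P p1 u = transport_map e P p1 u' \<and>
        transport_map e P p2 u = transport_map e P p2 u'"
    then obtain x x' where x: "x \<in> fst P" "u = e x" and x': "x' \<in> fst P" "u' = e x'" by auto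
    have "e (p1 x) = e (p1 x')" "e (p2 x) = e (p2 x')"
      using eq x x' app[OF eP] by simp_all
    hence "p1 x = p1 x'" "p2 x = p2 x'"
      using inj_onD[OF eA _ mhomD(1)[OF pbD(5) x(1)] mhomD(1)[OF pbD(5) x'(1)]]
        inj_onD[OF eB _ mhomD(1)[OF pbD(6) x(1)] mhomD(1)[OF pbD(6) x'(1)]] by blast+
    thus "u = u'" using pbD(10)[OF x(1) x'(1)] x x' by simp
  qed
  have surj: "\<forall>a\<in>fst (transport e A). \<forall>b\<in>fst (transport e B).
      transport_map e A f a = transport_map e B g b \<longrightarrow>
      (\<exists>u\<in>fst (transport e P). transport_map e P p1 u = a \<and> transport_map e P p2 u = b)"
  proof (intro ballI impI)
    fix a b assume "a \<in> fst (transport e A)" "b \<in> fst (transport e B)"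
      and eq: "transport_map e A f a = transport_map e B g b"
    then obtain a0 b0 where a0: "a0 \<in> fst A" "a = e a0" and b0: "b0 \<in> fst B" "b = e b0" by auto
    have "e (f a0) = e (g b0)" using eq a0 b0 app[OF eA] app[OF eB] by simp
    hence "f a0 = g b0"
      using inj_onD[OF eC _ mhomD(1)[OF pbD(7) a0(1)] mhomD(1)[OF pbD(8) b0(1)]] by blast
    then obtain x where "x \<in> fst P" "p1 x = a0" "p2 x = b0" using pbD(11) a0 b0 by blast
    thus "\<exists>u\<in>fst (transport e P). transport_map e P p1 u = a \<and> transport_map e P p2 u = b"
      using a0 b0 app[OF eP] by (intro bexI[of _ "e x"]) auto
  qed
  show ?thesis
    unfolding concrete_pullback_def
    by (intro conjI comm inj surj rmset_transport[OF eP pbD(1) M] rmset_transport[OF eA pbD(2) M]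
        rmset_transport[OF eB pbD(3) M] rmset_transport[OF eC pbD(4) M]
        mhom_transport_map[OF eP eA pbD(1) pbD(5)] mhom_transport_map[OF eP eB pbD(1) pbD(6)]
        mhom_transport_map[OF eA eC pbD(2) pbD(7)] mhom_transport_map[OF eB eC pbD(3) pbD(8)])
qed

section \<open>Reflections\<close>

lemma reflectionD:
  assumes "is_reflection M L R \<eta>" "rmset M A"
  shows "R A \<in> L" "mhom M A (R A) (\<eta> A)"
  using assms unfolding is_reflection_def by blast+

lemma reflection_factor:
  assumes "is_reflection M L R \<eta>" "rmset M A" "B \<in> L" "mhom M A B f"
  shows "\<exists>g. mhom M (R A) B g \<and> (\<forall>x\<in>fst A. g (\<eta> A x) = f x)"
  using assms unfolding is_reflection_def by blast

lemma reflection_hom_eqI: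
  assumes r: "is_reflection M L R \<eta>" and A: "rmset M A" and B: "B \<in> L"
    and g1: "mhom M (R A) B g1" and g2: "mhom M (R A) B g2"
    and eq: "\<And>x. x \<in> fst A \<Longrightarrow> g1 (\<eta> A x) = g2 (\<eta> A x)"
    and y: "y \<in> fst (R A)"
  shows "g1 y = g2 y"
proof -
  have "mhom M A B (\<lambda>x. g1 (\<eta> A x))" using mhom_comp[OF reflectionD(2)[OF r A] g1] .
  then obtain g where
    gu: "\<forall>g'. mhom M (R A) B g' \<and> (\<forall>x\<in>fst A. g' (\<eta> A x) = g1 (\<eta> A x))
                 \<longrightarrow> (\<forall>y\<in>fst (R A). g' y = g y)"
    using r A B unfolding is_reflection_def by blast
  have "g1 y = g y" using gu g1 y by blast
  moreover have "\<forall>x\<in>fst A. g2 (\<eta> A x) = g1 (\<eta> A x)" using eq by simp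
  hence "g2 y = g y" using gu g2 y by blast
  ultimately show ?thesis by simp
qed

lemma refl_mor:
  assumes r: "is_reflection M L R \<eta>" and A: "rmset M A" and A': "rmset M A'"
    and h: "mhom M A A' h"
  shows refl_mor_hom: "mhom M (R A) (R A') (refl_mor M R \<eta> A A' h)"
    and refl_mor_unit: "\<And>x. x \<in> fst A \<Longrightarrow> refl_mor M R \<eta> A A' h (\<eta> A x) = \<eta> A' (h x)"
proof -
  have "\<exists>g. mhom M (R A) (R A') g \<and> (\<forall>x\<in>fst A. g (\<eta> A x) = \<eta> A' (h x))"
    using reflection_factor[OF r A reflectionD(1)[OF r A']]
      mhom_comp[OF h reflectionD(2)[OF r A']] by blast
  hence "mhom M (R A) (R A') (refl_mor M R \<eta> A A' h) \<and>
      (\<forall>x\<in>fst A. refl_mor M R \<eta> A A' h (\<eta> A x) = \<eta> A' (h x))"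
    unfolding refl_mor_def by (rule someI_ex)
  thus "mhom M (R A) (R A') (refl_mor M R \<eta> A A' h)"
    "\<And>x. x \<in> fst A \<Longrightarrow> refl_mor M R \<eta> A A' h (\<eta> A x) = \<eta> A' (h x)" by blast+
qed

lemma refl_mor_eqI:
  assumes r: "is_reflection M L R \<eta>" and A: "rmset M A" and A': "rmset M A'"
    and h: "mhom M A A' h" and g: "mhom M (R A) (R A') g"
    and gh: "\<And>x. x \<in> fst A \<Longrightarrow> g (\<eta> A x) = \<eta> A' (h x)" and y: "y \<in> fst (R A)"
  shows "refl_mor M R \<eta> A A' h y = g y"
  using reflection_hom_eqI[OF r A reflectionD(1)[OF r A'] refl_mor_hom[OF r A A' h] g _ y]
    refl_mor_unit[OF r A A' h] gh by simp

section \<open>Sheaves for an idempotent ideal\<close>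

definition separated :: "('m,'b) monoid_scheme \<Rightarrow> 'm set \<Rightarrow> ('x,'m) mobj \<Rightarrow> bool" where
  "separated M I A \<longleftrightarrow> (\<forall>x\<in>fst A. \<forall>x'\<in>fst A. (\<forall>y\<in>I. snd A x y = snd A x' y) \<longrightarrow> x = x')"

definition extensible :: "('m,'b) monoid_scheme \<Rightarrow> 'm set \<Rightarrow> ('x,'m) mobj \<Rightarrow> bool" where
  "extensible M I A \<longleftrightarrow> (\<forall>\<phi>. mhom M (I, mult M) A \<phi> \<longrightarrow> (\<exists>x\<in>fst A. \<forall>y\<in>I. \<phi> y = snd A x y))"

lemma separatedD:
  "separated M I A \<Longrightarrow> x \<in> fst A \<Longrightarrow> x' \<in> fst A \<Longrightarrow> (\<And>y. y \<in> I \<Longrightarrow> snd A x y = snd A x' y) \<Longrightarrow> x = x'"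
  unfolding separated_def by blast

lemma extensibleD:
  "extensible M I A \<Longrightarrow> mhom M (I, mult M) A \<phi> \<Longrightarrow> \<exists>x\<in>fst A. \<forall>y\<in>I. \<phi> y = snd A x y"
  unfolding extensible_def by blast

locale idempotent_ideal = monoid M for M :: "('m,'b) monoid_scheme" (structure) +
  fixes I :: "'m set"
  assumes two_sided: "two_sided_ideal M I"
    and idempotent: "I = {x \<otimes>\<^bsub>M\<^esub> y | x y. x \<in> I \<and> y \<in> I}"
begin

lemma ideal_carrier: "x \<in> I \<Longrightarrow> x \<in> carrier M"
  using two_sided unfolding two_sided_ideal_def right_ideal_def by blast

lemma ideal_mult_right: "x \<in> I \<Longrightarrow> s \<in> carrier M \<Longrightarrow> x \<otimes> s \<in> I"
  using two_sided unfolding two_sided_ideal_def right_ideal_def by blast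

lemma ideal_mult_left: "x \<in> I \<Longrightarrow> s \<in> carrier M \<Longrightarrow> s \<otimes> x \<in> I"
  using two_sided unfolding two_sided_ideal_def by blast

lemma ideal_factor: "z \<in> I \<Longrightarrow> \<exists>x y. x \<in> I \<and> y \<in> I \<and> z = x \<otimes> y"
  using idempotent by blast

lemma ideal_in_topF: "I \<in> topF M I"
  using two_sided unfolding topF_def two_sided_ideal_def by blast

lemma topF_subset_carrier: "\<forall>a\<in>topF M I. a \<subseteq> carrier M"
  unfolding topF_def right_ideal_def by blast

lemma is_sheaf_iff: "is_sheaf M (topF M I) A \<longleftrightarrow> rmset M A \<and> separated M I A \<and> extensible M I A"
proof
  assume "is_sheaf M (topF M I) A"
  thus "rmset M A \<and> separated M I A \<and> extensible M I A"
    using ideal_in_topF unfolding is_sheaf_def separated_def extensible_def by blast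
next
  assume "rmset M A \<and> separated M I A \<and> extensible M I A"
  hence A: "rmset M A" and sep: "separated M I A" and ext: "extensible M I A" by blast+
  show "is_sheaf M (topF M I) A" unfolding is_sheaf_def
  proof (intro conjI A ballI allI impI)
    fix a x x' assume "a \<in> topF M I" "x \<in> fst A" "x' \<in> fst A" "\<forall>y\<in>a. snd A x y = snd A x' y"
    thus "x = x'" using separatedD[OF sep] unfolding topF_def by blast
  next
    fix a \<phi> assume a: "a \<in> topF M I" and ph: "mhom M (a, mult M) A \<phi>"
    have Ia: "I \<subseteq> a" and aM: "a \<subseteq> carrier M" using a unfolding topF_def right_ideal_def by blast+
    have "mhom M (I, mult M) A \<phi>" using ph Ia unfolding mhom_def by auto
    then obtain x where x: "x \<in> fst A" and hx: "\<forall>y\<in>I. \<phi> y = snd A x y"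
      using extensibleD[OF ext] by blast
    have "\<phi> y = snd A x y" if y: "y \<in> a" for y
    proof (rule separatedD[OF sep mhomD(1)[OF ph] rmsetD(1)[OF A x]])
      fix t assume t: "t \<in> I"
      have "snd A (\<phi> y) t = \<phi> (y \<otimes> t)" using mhomD(2)[OF ph, of y t] y ideal_carrier[OF t] by simp
      also have "\<dots> = snd A (snd A x y) t"
        using hx ideal_mult_left[OF t] rmsetD(3)[OF A x] y aM ideal_carrier[OF t] by auto
      finally show "snd A (\<phi> y) t = snd A (snd A x y) t" .
    qed (use y aM in auto)
    thus "\<exists>x\<in>fst A. \<forall>y\<in>a. \<phi> y = snd A x y" using x by blast
  qed
qed

text \<open>The plus construction Hom(I, A), with morphisms I \<rightarrow> A represented by functions
  extensional on I.\<close>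

definition plus_obj :: "('x,'m) mobj \<Rightarrow> ('m \<Rightarrow> 'x,'m) mobj" where
  "plus_obj A = ({\<phi> \<in> extensional I. (\<forall>y\<in>I. \<phi> y \<in> fst A) \<and>
        (\<forall>y\<in>I. \<forall>s\<in>carrier M. \<phi> (y \<otimes> s) = snd A (\<phi> y) s)},
      \<lambda>\<phi> s. restrict (\<lambda>y. \<phi> (s \<otimes> y)) I)"

definition plus_unit :: "('x,'m) mobj \<Rightarrow> 'x \<Rightarrow> ('m \<Rightarrow> 'x)" where
  "plus_unit A x = restrict (\<lambda>y. snd A x y) I"

definition plus_map :: "('x \<Rightarrow> 'y) \<Rightarrow> ('m \<Rightarrow> 'x) \<Rightarrow> ('m \<Rightarrow> 'y)" where
  "plus_map h \<phi> = restrict (\<lambda>y. h (\<phi> y)) I"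

lemma mem_plus: "\<phi> \<in> fst (plus_obj A) \<longleftrightarrow> \<phi> \<in> extensional I \<and> (\<forall>y\<in>I. \<phi> y \<in> fst A) \<and>
        (\<forall>y\<in>I. \<forall>s\<in>carrier M. \<phi> (y \<otimes> s) = snd A (\<phi> y) s)"
  by (simp add: plus_obj_def)

lemma plus_act: "snd (plus_obj A) \<phi> s = restrict (\<lambda>y. \<phi> (s \<otimes> y)) I"
  by (simp add: plus_obj_def)

lemma mem_plus_iff_mhom: "\<phi> \<in> fst (plus_obj A) \<longleftrightarrow> \<phi> \<in> extensional I \<and> mhom M (I, mult M) A \<phi>"
  unfolding mem_plus mhom_def by auto

lemma plus_map_apply: "y \<in> I \<Longrightarrow> plus_map h \<phi> y = h (\<phi> y)"
  by (simp add: plus_map_def)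

lemma rmset_plus: "rmset M (plus_obj A)"
  unfolding rmset_def
proof (intro conjI ballI)
  fix \<phi> s assume ph: "\<phi> \<in> fst (plus_obj A)" and s: "s \<in> carrier M"
  have "s \<otimes> (y \<otimes> t) = (s \<otimes> y) \<otimes> t" if "y \<in> I" "t \<in> carrier M" for y t
    using s that ideal_carrier by (simp add: m_assoc)
  thus "snd (plus_obj A) \<phi> s \<in> fst (plus_obj A)"
    using ph unfolding mem_plus plus_act by (auto simp: ideal_mult_left ideal_mult_right s)
next
  fix \<phi> assume "\<phi> \<in> fst (plus_obj A)"
  thus "snd (plus_obj A) \<phi> \<one> = \<phi>"
    unfolding plus_act mem_plus by (intro extensionalityI[of _ I]) (auto simp: ideal_carrier)
next
  fix \<phi> s t assume "s \<in> carrier M" "t \<in> carrier M"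
  thus "snd (plus_obj A) \<phi> (s \<otimes> t) = snd (plus_obj A) (snd (plus_obj A) \<phi> s) t"
    unfolding plus_act by (intro extensionalityI[of _ I]) (auto simp: ideal_carrier m_assoc ideal_mult_left)
qed

lemma plus_unit_mem:
  assumes A: "rmset M A" and x: "x \<in> fst A"
  shows "plus_unit A x \<in> fst (plus_obj A)"
  unfolding mem_plus plus_unit_def using rmsetD[OF A] x by (auto simp: ideal_carrier ideal_mult_right)

lemma mhom_plus_unit:
  assumes A: "rmset M A"
  shows "mhom M A (plus_obj A) (plus_unit A)"
  unfolding mhom_def
proof (intro conjI ballI plus_unit_mem[OF A])
  fix x s assume x: "x \<in> fst A" and s: "s \<in> carrier M"
  show "plus_unit A (snd A x s) = snd (plus_obj A) (plus_unit A x) s"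
    unfolding plus_unit_def plus_act
    by (intro extensionalityI[of _ I]) (auto simp: rmsetD(3)[OF A x s] ideal_carrier ideal_mult_left s)
qed

lemma plus_act_ideal:
  "\<phi> \<in> fst (plus_obj A) \<Longrightarrow> s \<in> I \<Longrightarrow> snd (plus_obj A) \<phi> s = plus_unit A (\<phi> s)"
  unfolding plus_act plus_unit_def mem_plus
  by (intro extensionalityI[of _ I]) (auto simp: ideal_carrier)

text \<open>This is where idempotence is used: every element of I is a product of two elements of I.\<close>

lemma separated_plus: "separated M I (plus_obj A)"
  unfolding separated_def
proof (intro ballI impI)
  fix \<phi> \<psi> assume "\<phi> \<in> fst (plus_obj A)" "\<psi> \<in> fst (plus_obj A)"
    and eq: "\<forall>y\<in>I. snd (plus_obj A) \<phi> y = snd (plus_obj A) \<psi> y"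
  hence ext: "\<phi> \<in> extensional I" "\<psi> \<in> extensional I" unfolding mem_plus by auto
  show "\<phi> = \<psi>"
  proof (rule extensionalityI[OF ext])
    fix z assume "z \<in> I"
    then obtain x y where xy: "x \<in> I" "y \<in> I" "z = x \<otimes> y" using ideal_factor by blast
    have "snd (plus_obj A) \<phi> x y = snd (plus_obj A) \<psi> x y" using eq xy by simp
    thus "\<phi> z = \<psi> z" unfolding plus_act using xy by simp
  qed
qed

text \<open>A morphism \<Phi> : I \<rightarrow> Hom(I, A) assigns \<Phi> s y to the product s y; for separated A this
  depends only on the product, which lets \<Phi> be glued to a single element of Hom(I, A).\<close>

lemma plus_hom_compatible:
  assumes sep: "separated M I A" and Ph: "mhom M (I, mult M) (plus_obj A) \<Phi>"
    and s: "s \<in> I" and y: "y \<in> I" and s': "s' \<in> I" and y': "y' \<in> I" and eq: "s \<otimes> y = s' \<otimes> y'"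
  shows "\<Phi> s y = \<Phi> s' y'"
proof -
  have val: "\<Phi> s y \<in> fst A" if "s \<in> I" "y \<in> I" for s y
    using mhomD(1)[OF Ph] that unfolding mem_plus by auto
  have act: "snd A (\<Phi> s y) t = \<Phi> (s \<otimes> y) t" if s: "s \<in> I" and y: "y \<in> I" and t: "t \<in> I" for s y t
  proof -
    have "\<Phi> (s \<otimes> y) t = snd (plus_obj A) (\<Phi> s) y t" using mhomD(2)[OF Ph] s ideal_carrier[OF y] by simp
    also have "\<dots> = \<Phi> s (y \<otimes> t)" unfolding plus_act using t by simp
    also have "\<dots> = snd A (\<Phi> s y) t"
      using mhomD(1)[OF Ph] s y ideal_carrier[OF t] unfolding mem_plus by auto
    finally show ?thesis by simp
  qed
  show ?thesis using separatedD[OF sep val[OF s y] val[OF s' y']] act s y s' y' eq by simp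
qed

lemma extensible_plus:
  assumes sep: "separated M I A"
  shows "extensible M I (plus_obj A)"
  unfolding extensible_def
proof (intro allI impI)
  fix \<Phi> assume Ph: "mhom M (I, mult M) (plus_obj A) \<Phi>"
  have Ph_mem: "\<And>s. s \<in> I \<Longrightarrow> \<Phi> s \<in> fst (plus_obj A)" using mhomD(1)[OF Ph] by simp
  define split where "split z = (SOME p. fst p \<in> I \<and> snd p \<in> I \<and> z = fst p \<otimes> snd p)" for z
  have split: "fst (split z) \<in> I \<and> snd (split z) \<in> I \<and> z = fst (split z) \<otimes> snd (split z)"
    if "z \<in> I" for z
    unfolding split_def by (rule someI_ex) (use ideal_factor[OF that] in auto)
  define \<psi> where "\<psi> = restrict (\<lambda>z. \<Phi> (fst (split z)) (snd (split z))) I"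
  have \<psi>: "\<psi> (s \<otimes> y) = \<Phi> s y" if s: "s \<in> I" and y: "y \<in> I" for s y
  proof -
    have z: "s \<otimes> y \<in> I" using ideal_mult_right[OF s ideal_carrier[OF y]] .
    have "\<psi> (s \<otimes> y) = \<Phi> (fst (split (s \<otimes> y))) (snd (split (s \<otimes> y)))"
      by (simp add: \<psi>_def z)
    also have "\<dots> = \<Phi> s y"
      by (rule plus_hom_compatible[OF sep Ph]) (use split[OF z] s y in auto)
    finally show ?thesis .
  qed
  have "\<psi> \<in> fst (plus_obj A)" unfolding mem_plus
  proof (intro conjI ballI)
    show "\<psi> \<in> extensional I" unfolding \<psi>_def by simp
  next
    fix z assume "z \<in> I"
    then obtain s y where "s \<in> I" "y \<in> I" "z = s \<otimes> y" using ideal_factor by blast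
    thus "\<psi> z \<in> fst A" using \<psi> Ph_mem unfolding mem_plus by auto
  next
    fix z t assume "z \<in> I" and t: "t \<in> carrier M"
    then obtain s y where sy: "s \<in> I" "y \<in> I" "z = s \<otimes> y" using ideal_factor by blast
    have "z \<otimes> t = s \<otimes> (y \<otimes> t)" using sy t by (simp add: m_assoc ideal_carrier)
    thus "\<psi> (z \<otimes> t) = snd A (\<psi> z) t"
      using \<psi>[OF sy(1) ideal_mult_right[OF sy(2) t]] \<psi>[OF sy(1,2)] Ph_mem[OF sy(1)] sy t
      unfolding mem_plus by auto
  qed
  moreover have "\<Phi> s = snd (plus_obj A) \<psi> s" if s: "s \<in> I" for s
    using Ph_mem[OF s] unfolding plus_act mem_plus
    by (intro extensionalityI[of _ I]) (auto simp: \<psi> s)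
  ultimately show "\<exists>x\<in>fst (plus_obj A). \<forall>y\<in>I. \<Phi> y = snd (plus_obj A) x y" by blast
qed

definition amalgamation :: "('x,'m) mobj \<Rightarrow> ('m \<Rightarrow> 'x) \<Rightarrow> 'x" where
  "amalgamation Y \<psi> = (THE y. y \<in> fst Y \<and> (\<forall>s\<in>I. \<psi> s = snd Y y s))"

lemma amalgamation_eqI:
  "separated M I Y \<Longrightarrow> y \<in> fst Y \<Longrightarrow> (\<And>s. s \<in> I \<Longrightarrow> \<psi> s = snd Y y s) \<Longrightarrow> amalgamation Y \<psi> = y"
  unfolding amalgamation_def by (rule the_equality) (auto intro: separatedD)

lemma amalgamation:
  assumes "separated M I Y" "extensible M I Y" "mhom M (I, mult M) Y \<psi>"
  shows "amalgamation Y \<psi> \<in> fst Y" "\<And>s. s \<in> I \<Longrightarrow> \<psi> s = snd Y (amalgamation Y \<psi>) s"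
  using amalgamation_eqI[OF assms(1)] extensibleD[OF assms(2,3)] by metis+

lemma plus_hom_exists:
  assumes A: "rmset M A" and Y: "rmset M Y" and sep: "separated M I Y" and ext: "extensible M I Y"
    and f: "mhom M A Y f"
  shows "\<exists>g. mhom M (plus_obj A) Y g \<and> (\<forall>x\<in>fst A. g (plus_unit A x) = f x)"
proof -
  define g where "g \<phi> = amalgamation Y (\<lambda>s. f (\<phi> s))" for \<phi>
  have g: "g \<phi> \<in> fst Y" "\<And>s. s \<in> I \<Longrightarrow> f (\<phi> s) = snd Y (g \<phi>) s" if "\<phi> \<in> fst (plus_obj A)" for \<phi>
    using amalgamation[OF sep ext mhom_comp[OF _ f]] that unfolding g_def mem_plus_iff_mhom by blast+
  have "mhom M (plus_obj A) Y g"
    unfolding mhom_def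
  proof (intro conjI ballI)
    fix \<phi> r assume ph: "\<phi> \<in> fst (plus_obj A)" and r: "r \<in> carrier M"
    show "g (snd (plus_obj A) \<phi> r) = snd Y (g \<phi>) r"
      unfolding g_def[of "snd (plus_obj A) \<phi> r"]
    proof (rule amalgamation_eqI[OF sep rmsetD(1)[OF Y g(1)[OF ph] r]])
      fix s assume s: "s \<in> I"
      have "f (snd (plus_obj A) \<phi> r s) = snd Y (g \<phi>) (r \<otimes> s)"
        unfolding plus_act using s g(2)[OF ph ideal_mult_left[OF s r]] by simp
      thus "f (snd (plus_obj A) \<phi> r s) = snd Y (snd Y (g \<phi>) r) s"
        using rmsetD(3)[OF Y g(1)[OF ph] r ideal_carrier[OF s]] by simp
    qed
  qed (use g in blast)
  moreover have "g (plus_unit A x) = f x" if x: "x \<in> fst A" for x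
    unfolding g_def[of "plus_unit A x"]
    by (rule amalgamation_eqI[OF sep mhomD(1)[OF f x]])
       (simp add: plus_unit_def mhomD(2)[OF f x] ideal_carrier)
  ultimately show ?thesis by blast
qed

lemma plus_hom_eqI:
  assumes A: "rmset M A" and sep: "separated M I Y"
    and g: "mhom M (plus_obj A) Y g" and g': "mhom M (plus_obj A) Y g'"
    and eq: "\<And>x. x \<in> fst A \<Longrightarrow> g (plus_unit A x) = g' (plus_unit A x)"
    and ph: "\<phi> \<in> fst (plus_obj A)"
  shows "g \<phi> = g' \<phi>"
proof (rule separatedD[OF sep mhomD(1)[OF g ph] mhomD(1)[OF g' ph]])
  fix s assume s: "s \<in> I"
  have "\<phi> s \<in> fst A" using ph s unfolding mem_plus by blast
  thus "snd Y (g \<phi>) s = snd Y (g' \<phi>) s"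
    using mhomD(2)[OF g ph ideal_carrier[OF s]] mhomD(2)[OF g' ph ideal_carrier[OF s]]
      plus_act_ideal[OF ph s] eq by simp
qed

lemma mhom_plus_map:
  assumes h: "mhom M A B h"
  shows "mhom M (plus_obj A) (plus_obj B) (plus_map h)"
  unfolding mhom_def
proof (intro conjI ballI)
  fix \<phi> assume "\<phi> \<in> fst (plus_obj A)"
  thus "plus_map h \<phi> \<in> fst (plus_obj B)"
    using mhomD[OF h] unfolding mem_plus plus_map_def by (auto simp: ideal_mult_right)
next
  fix \<phi> s assume "s \<in> carrier M"
  thus "plus_map h (snd (plus_obj A) \<phi> s) = snd (plus_obj B) (plus_map h \<phi>) s"
    unfolding plus_map_def plus_act by (intro extensionalityI[of _ I]) (auto simp: ideal_mult_left)
qed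

lemma plus_map_unit: "mhom M A B h \<Longrightarrow> x \<in> fst A \<Longrightarrow> plus_map h (plus_unit A x) = plus_unit B (h x)"
  unfolding plus_map_def plus_unit_def
  by (intro extensionalityI[of _ I]) (auto simp: mhomD(2) ideal_carrier)

lemma plus_singleton:
  assumes "fst T = {t}" "rmset M T"
  shows "fst (plus_obj T) = {restrict (\<lambda>_. t) I}"
proof -
  have "\<phi> = restrict (\<lambda>_. t) I" if "\<phi> \<in> fst (plus_obj T)" for \<phi>
    using that assms(1) unfolding mem_plus by (intro extensionalityI[of _ I]) auto
  moreover have "restrict (\<lambda>_. t) I \<in> fst (plus_obj T)"
    unfolding mem_plus using assms rmsetD(1)[OF assms(2)] ideal_mult_right by auto
  ultimately show ?thesis by blast
qed

lemma plus_jointly_surj: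
  assumes pb: "concrete_pullback M P p1 p2 A B C f g"
    and \<alpha>: "\<alpha> \<in> fst (plus_obj A)" and \<beta>: "\<beta> \<in> fst (plus_obj B)" and eq: "plus_map f \<alpha> = plus_map g \<beta>"
  shows "\<exists>\<phi>\<in>fst (plus_obj P). plus_map p1 \<phi> = \<alpha> \<and> plus_map p2 \<phi> = \<beta>"
proof -
  note pbD = concrete_pullbackD[OF pb]
  have fg: "f (\<alpha> y) = g (\<beta> y)" if "y \<in> I" for y using eq plus_map_apply[OF that] by metis
  define \<phi> where "\<phi> = restrict (\<lambda>y. SOME x. x \<in> fst P \<and> p1 x = \<alpha> y \<and> p2 x = \<beta> y) I"
  have \<phi>: "\<phi> y \<in> fst P \<and> p1 (\<phi> y) = \<alpha> y \<and> p2 (\<phi> y) = \<beta> y" if y: "y \<in> I" for y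
  proof -
    have "\<alpha> y \<in> fst A" "\<beta> y \<in> fst B" using \<alpha> \<beta> y unfolding mem_plus by blast+
    hence "\<exists>x. x \<in> fst P \<and> p1 x = \<alpha> y \<and> p2 x = \<beta> y" using pbD(11) fg[OF y] by blast
    from someI_ex[OF this] show ?thesis using y unfolding \<phi>_def by simp
  qed
  have "\<phi> \<in> fst (plus_obj P)" unfolding mem_plus
  proof (intro conjI ballI)
    fix y s assume y: "y \<in> I" and s: "s \<in> carrier M"
    note ys = \<phi>[OF ideal_mult_right[OF y s]]
    show "\<phi> (y \<otimes> s) = snd P (\<phi> y) s"
    proof (rule pbD(10))
      show "\<phi> (y \<otimes> s) \<in> fst P" "snd P (\<phi> y) s \<in> fst P"
        using ys rmsetD(1)[OF pbD(1)] \<phi>[OF y] s by blast+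
      show "p1 (\<phi> (y \<otimes> s)) = p1 (snd P (\<phi> y) s)" "p2 (\<phi> (y \<otimes> s)) = p2 (snd P (\<phi> y) s)"
        using ys \<phi>[OF y] mhomD(2)[OF pbD(5) _ s] mhomD(2)[OF pbD(6) _ s] \<alpha> \<beta> y s
        unfolding mem_plus by simp_all
    qed
  qed (use \<phi> in \<open>auto simp: \<phi>_def\<close>)
  moreover have "plus_map p1 \<phi> = \<alpha>" "plus_map p2 \<phi> = \<beta>"
    using \<alpha> \<beta> \<phi> unfolding mem_plus plus_map_def by (auto intro!: extensionalityI[of _ I])
  ultimately show ?thesis by blast
qed

lemma concrete_pullback_plus:
  assumes pb: "concrete_pullback M P p1 p2 A B C f g"
  shows "concrete_pullback M (plus_obj P) (plus_map p1) (plus_map p2) (plus_obj A) (plus_obj B)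
    (plus_obj C) (plus_map f) (plus_map g)"
proof -
  note pbD = concrete_pullbackD[OF pb]
  have comm: "\<forall>\<phi>\<in>fst (plus_obj P). plus_map f (plus_map p1 \<phi>) = plus_map g (plus_map p2 \<phi>)"
    using pbD(9) by (auto simp: plus_map_def mem_plus intro!: extensionalityI[of _ I])
  have inj: "\<forall>\<phi>\<in>fst (plus_obj P). \<forall>\<phi>'\<in>fst (plus_obj P).
      plus_map p1 \<phi> = plus_map p1 \<phi>' \<and> plus_map p2 \<phi> = plus_map p2 \<phi>' \<longrightarrow> \<phi> = \<phi>'"
  proof (intro ballI impI)
    fix \<phi> \<phi>' assume ph: "\<phi> \<in> fst (plus_obj P)" and ph': "\<phi>' \<in> fst (plus_obj P)"
      and eq: "plus_map p1 \<phi> = plus_map p1 \<phi>' \<and> plus_map p2 \<phi> = plus_map p2 \<phi>'"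
    show "\<phi> = \<phi>'"
    proof (rule extensionalityI[of _ I])
      show "\<phi> \<in> extensional I" "\<phi>' \<in> extensional I" using ph ph' unfolding mem_plus by blast+
    next
      fix y assume y: "y \<in> I"
      have "p1 (\<phi> y) = p1 (\<phi>' y)" "p2 (\<phi> y) = p2 (\<phi>' y)"
        using eq plus_map_apply[OF y, of p1] plus_map_apply[OF y, of p2] by metis+
      thus "\<phi> y = \<phi>' y" using pbD(10) ph ph' y unfolding mem_plus by blast
    qed
  qed
  show ?thesis
    unfolding concrete_pullback_def
    by (intro conjI comm inj rmset_plus mhom_plus_map pbD(5-8) ballI impI plus_jointly_surj[OF pb])
qed

end

text \<open>Sheafification applies the plus construction twice and copies the result into the universe
  along an injection on the twice-extensional functions on I.\<close>

locale sheafification = idempotent_ideal M I for M :: "('m,'b) monoid_scheme" (structure)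
    and I :: "'m set" +
  fixes enc :: "('m \<Rightarrow> 'm \<Rightarrow> 'u) \<Rightarrow> 'u" and emb :: "'m \<Rightarrow> 'u"
  assumes enc_inj: "inj_on enc {\<Phi>. \<Phi> \<in> extensional I \<and> (\<forall>s\<in>I. \<Phi> s \<in> extensional I)}"
    and emb_inj: "inj_on emb (carrier M)"
begin

definition sheafify :: "('u,'m) mobj \<Rightarrow> ('u,'m) mobj" where
  "sheafify A = transport enc (plus_obj (plus_obj A))"

definition sheafify_unit :: "('u,'m) mobj \<Rightarrow> 'u \<Rightarrow> 'u" where
  "sheafify_unit A x = enc (plus_unit (plus_obj A) (plus_unit A x))"

definition sheafify_map :: "('u,'m) mobj \<Rightarrow> ('u \<Rightarrow> 'u) \<Rightarrow> 'u \<Rightarrow> 'u" where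
  "sheafify_map A h = transport_map enc (plus_obj (plus_obj A)) (plus_map (plus_map h))"

lemma enc_inj_on_plus_plus: "inj_on enc (fst (plus_obj (plus_obj A)))"
  by (rule inj_on_subset[OF enc_inj]) (auto simp: mem_plus)

lemma is_sheaf_plus_plus: "rmset M A \<Longrightarrow> is_sheaf M (topF M I) (plus_obj (plus_obj A))"
  using is_sheaf_iff rmset_plus separated_plus extensible_plus[OF separated_plus] by blast

lemma is_sheaf_sheafify: "rmset M A \<Longrightarrow> is_sheaf M (topF M I) (sheafify A)"
  unfolding sheafify_def
  by (rule is_sheaf_miso[OF miso_transport[OF enc_inj_on_plus_plus rmset_plus]
        is_sheaf_plus_plus monoid_axioms topF_subset_carrier])

lemma mhom_sheafify_unit: "rmset M A \<Longrightarrow> mhom M A (sheafify A) (sheafify_unit A)"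
  unfolding sheafify_def sheafify_unit_def
  by (rule mhom_comp[OF mhom_comp[OF mhom_plus_unit mhom_plus_unit[OF rmset_plus]]
        mhom_transport[OF enc_inj_on_plus_plus rmset_plus]])

lemma sheafify_unit_mem:
  "rmset M A \<Longrightarrow> x \<in> fst A \<Longrightarrow> plus_unit (plus_obj A) (plus_unit A x) \<in> fst (plus_obj (plus_obj A))"
  using plus_unit_mem[OF rmset_plus plus_unit_mem] .

lemma sheafify_hom_eqI:
  assumes A: "rmset M A" and sep: "separated M I B"
    and g: "mhom M (sheafify A) B g" and g': "mhom M (sheafify A) B g'"
    and eq: "\<And>x. x \<in> fst A \<Longrightarrow> g (sheafify_unit A x) = g' (sheafify_unit A x)"
    and y: "y \<in> fst (sheafify A)"
  shows "g y = g' y"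
proof -
  note enc = mhom_transport[OF enc_inj_on_plus_plus rmset_plus, of A, folded sheafify_def]
  note unit = mhom_plus_unit[OF rmset_plus, of A]
  have on_plus: "g (enc (plus_unit (plus_obj A) \<phi>)) = g' (enc (plus_unit (plus_obj A) \<phi>))"
    if "\<phi> \<in> fst (plus_obj A)" for \<phi>
    by (rule plus_hom_eqI[OF A sep mhom_comp[OF unit mhom_comp[OF enc g]]
          mhom_comp[OF unit mhom_comp[OF enc g']] _ that])
       (use eq in \<open>simp add: sheafify_unit_def\<close>)
  obtain \<Phi> where "\<Phi> \<in> fst (plus_obj (plus_obj A))" "y = enc \<Phi>"
    using y unfolding sheafify_def by auto
  thus ?thesis
    using plus_hom_eqI[OF rmset_plus sep mhom_comp[OF enc g] mhom_comp[OF enc g']] on_plus by simp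
qed

lemma reflection_sheafify: "is_reflection M (Sh M (topF M I)) sheafify sheafify_unit"
  unfolding is_reflection_def
proof (intro allI impI conjI ballI)
  fix A :: "('u,'m) mobj" assume A: "rmset M A"
  show "sheafify A \<in> Sh M (topF M I)" using is_sheaf_sheafify[OF A] by (simp add: Sh_def)
  show "mhom M A (sheafify A) (sheafify_unit A)" using mhom_sheafify_unit[OF A] .
  fix B :: "('u,'m) mobj" and f assume "B \<in> Sh M (topF M I)" and f: "mhom M A B f"
  hence B: "rmset M B" "separated M I B" "extensible M I B" unfolding Sh_def is_sheaf_iff by blast+
  obtain g1 where g1: "mhom M (plus_obj A) B g1" and g1e: "\<forall>x\<in>fst A. g1 (plus_unit A x) = f x"
    using plus_hom_exists[OF A B f] by blast
  obtain g2 where g2: "mhom M (plus_obj (plus_obj A)) B g2"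
    and g2e: "\<forall>\<phi>\<in>fst (plus_obj A). g2 (plus_unit (plus_obj A) \<phi>) = g1 \<phi>"
    using plus_hom_exists[OF rmset_plus B g1] by blast
  define g where "g = (\<lambda>y. g2 (inv_into (fst (plus_obj (plus_obj A))) enc y))"
  have gh: "mhom M (sheafify A) B g"
    unfolding sheafify_def g_def
    using mhom_comp[OF mhom_transport_inv[OF enc_inj_on_plus_plus rmset_plus] g2] .
  moreover have ge: "\<forall>x\<in>fst A. g (sheafify_unit A x) = f x"
    unfolding g_def sheafify_unit_def
    using inv_into_f_f[OF enc_inj_on_plus_plus sheafify_unit_mem[OF A]] g2e g1e plus_unit_mem[OF A]
    by simp
  moreover have "\<forall>g'. mhom M (sheafify A) B g' \<and> (\<forall>x\<in>fst A. g' (sheafify_unit A x) = f x)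
      \<longrightarrow> (\<forall>y\<in>fst (sheafify A). g' y = g y)"
  proof (intro allI impI ballI)
    fix g' y assume "mhom M (sheafify A) B g' \<and> (\<forall>x\<in>fst A. g' (sheafify_unit A x) = f x)"
      and y: "y \<in> fst (sheafify A)"
    hence g': "mhom M (sheafify A) B g'" and g'e: "\<forall>x\<in>fst A. g' (sheafify_unit A x) = f x" by blast+
    show "g' y = g y" by (rule sheafify_hom_eqI[OF A B(2) g' gh _ y]) (simp add: g'e ge)
  qed
  ultimately show "\<exists>g. mhom M (sheafify A) B g \<and> (\<forall>x\<in>fst A. g (sheafify_unit A x) = f x) \<and>
           (\<forall>g'. mhom M (sheafify A) B g' \<and> (\<forall>x\<in>fst A. g' (sheafify_unit A x) = f x)
                 \<longrightarrow> (\<forall>y\<in>fst (sheafify A). g' y = g y))"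
    by blast
qed

lemma refl_mor_sheafify:
  assumes A: "rmset M A" and A': "rmset M A'" and h: "mhom M A A' h" and y: "y \<in> fst (sheafify A)"
  shows "refl_mor M sheafify sheafify_unit A A' h y = sheafify_map A h y"
proof (rule refl_mor_eqI[OF reflection_sheafify A A' h _ _ y])
  show "mhom M (sheafify A) (sheafify A') (sheafify_map A h)"
    unfolding sheafify_def sheafify_map_def
    by (rule mhom_transport_map[OF enc_inj_on_plus_plus enc_inj_on_plus_plus rmset_plus
          mhom_plus_map[OF mhom_plus_map[OF h]]])
  fix x assume x: "x \<in> fst A"
  show "sheafify_map A h (sheafify_unit A x) = sheafify_unit A' (h x)"
    unfolding sheafify_map_def sheafify_unit_def
    using transport_map_apply[OF enc_inj_on_plus_plus sheafify_unit_mem[OF A x]]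
      plus_map_unit[OF mhom_plus_map[OF h] plus_unit_mem[OF A x]] plus_map_unit[OF h x] by simp
qed

lemma full_replete_Sh: "full_replete M (Sh M (topF M I) :: ('u,'m) mobj set)"
  unfolding full_replete_def
proof (intro conjI allI impI subsetI)
  fix A :: "('u,'m) mobj" assume "A \<in> Sh M (topF M I)"
  thus "A \<in> {A. rmset M A}" unfolding Sh_def is_sheaf_def by blast
next
  fix A B :: "('u,'m) mobj" assume "A \<in> Sh M (topF M I)" and "miso M A B"
  thus "B \<in> Sh M (topF M I)"
    using is_sheaf_miso[OF _ _ monoid_axioms topF_subset_carrier] unfolding Sh_def by blast
qed

lemma is_terminal_sheafify:
  fixes T :: "('u,'m) mobj"
  assumes "is_terminal M T"
  shows "is_terminal M (sheafify T)"
proof -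
  obtain t where T: "rmset M T" and t: "fst T = {t}"
    using assms is_terminal_iff_singleton[OF monoid_axioms emb_inj] by blast
  have "fst (plus_obj (plus_obj T)) = {restrict (\<lambda>_. restrict (\<lambda>_. t) I) I}"
    using plus_singleton[OF plus_singleton[OF t T] rmset_plus] .
  hence "\<exists>t. fst (sheafify T) = {t}" unfolding sheafify_def by simp
  moreover have "rmset M (sheafify T)" using is_sheaf_sheafify[OF T] unfolding is_sheaf_def by blast
  ultimately show ?thesis using is_terminal_iff_singleton[OF monoid_axioms emb_inj] by blast
qed

lemma is_pullback_sheafify:
  fixes P A B C :: "('u,'m) mobj"
  assumes "is_pullback M P p1 p2 A B C f g"
  shows "is_pullback M (sheafify P) (refl_mor M sheafify sheafify_unit P A p1)
    (refl_mor M sheafify sheafify_unit P B p2) (sheafify A) (sheafify B) (sheafify C)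
    (refl_mor M sheafify sheafify_unit A C f) (refl_mor M sheafify sheafify_unit B C g)"
proof -
  note iff = is_pullback_iff_concrete[OF monoid_axioms emb_inj]
  have pb: "concrete_pullback M P p1 p2 A B C f g" using assms iff by blast
  note pbD = concrete_pullbackD[OF pb]
  have "concrete_pullback M (sheafify P) (sheafify_map P p1) (sheafify_map P p2)
      (sheafify A) (sheafify B) (sheafify C) (sheafify_map A f) (sheafify_map B g)"
    unfolding sheafify_def sheafify_map_def
    by (rule concrete_pullback_transport[OF concrete_pullback_plus[OF concrete_pullback_plus[OF pb]]
          monoid_axioms enc_inj_on_plus_plus enc_inj_on_plus_plus enc_inj_on_plus_plus
          enc_inj_on_plus_plus])
  hence "concrete_pullback M (sheafify P) (refl_mor M sheafify sheafify_unit P A p1)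
    (refl_mor M sheafify sheafify_unit P B p2) (sheafify A) (sheafify B) (sheafify C)
    (refl_mor M sheafify sheafify_unit A C f) (refl_mor M sheafify sheafify_unit B C g)"
    by (rule concrete_pullback_cong) (use refl_mor_sheafify pbD(1-8) in blast)+
  thus ?thesis using iff by blast
qed

theorem localising_Sh: "localising M (Sh M (topF M I) :: ('u,'m) mobj set)"
  unfolding localising_def
  by (intro conjI exI[of _ sheafify] exI[of _ sheafify_unit] full_replete_Sh reflection_sheafify
      allI impI is_terminal_sheafify is_pullback_sheafify) (assumption+)

text \<open>Evaluating the unit of the double plus construction at s and t in I gives the action of
  s t, and by idempotence these products exhaust I.\<close>

lemma sheafify_unit_eqD:
  assumes A: "rmset M A" and x: "x \<in> fst A" and x': "x' \<in> fst A"
    and eq: "sheafify_unit A x = sheafify_unit A x'" and z: "z \<in> I"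
  shows "snd A x z = snd A x' z"
proof -
  have "plus_unit (plus_obj A) (plus_unit A x) = plus_unit (plus_obj A) (plus_unit A x')"
    using eq inj_onD[OF enc_inj_on_plus_plus _ sheafify_unit_mem[OF A x] sheafify_unit_mem[OF A x']]
    unfolding sheafify_unit_def by blast
  moreover obtain s t where "s \<in> I" "t \<in> I" "z = s \<otimes> t" using ideal_factor[OF z] by blast
  ultimately show ?thesis
    unfolding plus_unit_def plus_act
    by (metis (no_types, lifting) ideal_carrier ideal_mult_right restrict_apply')
qed

end

section \<open>Dense ideals of a localising subcategory\<close>

text \<open>The universe carries a copy of M and a pairing function, so that the regular M-set and binary
  products exist inside it.\<close>

locale localising_reflector = monoid M for M :: "('m,'b) monoid_scheme" (structure) +
  fixes L :: "('u,'m) mobj set" and R :: "('u,'m) mobj \<Rightarrow> ('u,'m) mobj"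
    and \<eta> :: "('u,'m) mobj \<Rightarrow> 'u \<Rightarrow> 'u" and emb :: "'m \<Rightarrow> 'u" and pr :: "'u \<times> 'u \<Rightarrow> 'u"
  assumes full_replete: "full_replete M L" and reflection: "is_reflection M L R \<eta>"
    and preserves_pullbacks: "\<And>P p1 p2 A B C f g. is_pullback M P p1 p2 A B C f g \<Longrightarrow>
            is_pullback M (R P) (refl_mor M R \<eta> P A p1) (refl_mor M R \<eta> P B p2)
              (R A) (R B) (R C) (refl_mor M R \<eta> A C f) (refl_mor M R \<eta> B C g)"
    and emb_inj: "inj_on emb (carrier M)" and pr_inj: "inj pr" and finite_carrier: "finite (carrier M)"
begin

abbreviation R_map :: "('u,'m) mobj \<Rightarrow> ('u,'m) mobj \<Rightarrow> ('u \<Rightarrow> 'u) \<Rightarrow> 'u \<Rightarrow> 'u" where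
  "R_map X Y h \<equiv> refl_mor M R \<eta> X Y h"

lemma rmset_of_L: "B \<in> L \<Longrightarrow> rmset M B"
  using full_replete unfolding full_replete_def by blast

lemma R_in_L: "rmset M X \<Longrightarrow> R X \<in> L"
  using reflectionD(1)[OF reflection] .

lemma rmset_R: "rmset M X \<Longrightarrow> rmset M (R X)"
  using rmset_of_L R_in_L by blast

lemma mhom_eta: "rmset M X \<Longrightarrow> mhom M X (R X) (\<eta> X)"
  using reflectionD(2)[OF reflection] .

lemma mhom_R_map: "rmset M X \<Longrightarrow> rmset M Y \<Longrightarrow> mhom M X Y h \<Longrightarrow> mhom M (R X) (R Y) (R_map X Y h)"
  using refl_mor_hom[OF reflection] .

lemma R_map_eta:
  "rmset M X \<Longrightarrow> rmset M Y \<Longrightarrow> mhom M X Y h \<Longrightarrow> x \<in> fst X \<Longrightarrow> R_map X Y h (\<eta> X x) = \<eta> Y (h x)"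
  using refl_mor_unit[OF reflection] .

lemma R_map_id: "rmset M X \<Longrightarrow> w \<in> fst (R X) \<Longrightarrow> R_map X X (\<lambda>x. x) w = w"
  using refl_mor_eqI[OF reflection _ _ mhom_id mhom_id[OF rmset_R]] by simp

lemma R_map_comp:
  assumes X: "rmset M X" and Y: "rmset M Y" and Z: "rmset M Z"
    and h: "mhom M X Y h" and k: "mhom M Y Z k" and w: "w \<in> fst (R X)"
  shows "R_map X Z (\<lambda>x. k (h x)) w = R_map Y Z k (R_map X Y h w)"
proof (rule refl_mor_eqI[OF reflection X Z mhom_comp[OF h k]
      mhom_comp[OF mhom_R_map[OF X Y h] mhom_R_map[OF Y Z k]] _ w])
  fix x assume x: "x \<in> fst X"
  show "R_map Y Z k (R_map X Y h (\<eta> X x)) = \<eta> Z (k (h x))"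
    using R_map_eta[OF X Y h x] R_map_eta[OF Y Z k mhomD(1)[OF h x]] by simp
qed

lemma R_map_eta_self: "rmset M X \<Longrightarrow> w \<in> fst (R X) \<Longrightarrow> R_map X (R X) (\<eta> X) w = \<eta> (R X) w"
  using refl_mor_eqI[OF reflection _ rmset_R mhom_eta mhom_eta[OF rmset_R]] by simp

lemma concrete_pullback_R:
  assumes "concrete_pullback M P p1 p2 A B C f g"
  shows "concrete_pullback M (R P) (R_map P A p1) (R_map P B p2) (R A) (R B) (R C)
    (R_map A C f) (R_map B C g)"
  using preserves_pullbacks assms is_pullback_iff_concrete[OF monoid_axioms emb_inj] by blast

text \<open>R preserves monomorphisms, since these are the maps whose kernel pair is trivial.\<close>

lemma R_map_inj:
  assumes X: "rmset M X" and Y: "rmset M Y" and h: "mhom M X Y h" and inj: "inj_on h (fst X)"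
  shows "inj_on (R_map X Y h) (fst (R X))"
proof (rule inj_onI)
  fix w w' assume w: "w \<in> fst (R X)" and w': "w' \<in> fst (R X)" and eq: "R_map X Y h w = R_map X Y h w'"
  have "concrete_pullback M X (\<lambda>x. x) (\<lambda>x. x) X X Y h h"
    unfolding concrete_pullback_def using X Y h mhom_id[OF X] inj_onD[OF inj] by blast
  from concrete_pullbackD(11)[OF concrete_pullback_R[OF this] w w' eq]
  obtain v where "R_map X X (\<lambda>x. x) v = w" "R_map X X (\<lambda>x. x) v = w'" by blast
  thus "w = w'" by simp
qed

lemma image_in_L:
  assumes A: "A \<in> L" and h: "mhom M A B h" and inj: "inj_on h (fst A)"
  shows "(h ` fst A, snd B) \<in> L"
proof -
  let ?Z = "(h ` fst A, snd B)"
  have rA: "rmset M A" using rmset_of_L[OF A] .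
  have hZ: "mhom M A ?Z h" using h unfolding mhom_def by auto
  have "mhom M ?Z A (inv_into (fst A) h)"
    unfolding mhom_def
  proof (intro conjI ballI)
    fix z s assume "z \<in> fst ?Z" and s: "s \<in> carrier M"
    then obtain x where x: "x \<in> fst A" "z = h x" by auto
    show "inv_into (fst A) h (snd ?Z z s) = snd A (inv_into (fst A) h z) s"
      using x mhomD(2)[OF h x(1) s, symmetric] inv_into_f_f[OF inj] rmsetD(1)[OF rA x(1) s] by simp
  qed (auto intro: inv_into_into)
  hence iso: "miso M A ?Z"
    unfolding miso_def using hZ inv_into_f_f[OF inj] f_inv_into_f[of _ h "fst A"]
    by (intro exI[of _ h] exI[of _ "inv_into (fst A) h"]) auto
  show ?thesis
    using full_replete iso A rmset_miso[OF iso rA monoid_axioms] unfolding full_replete_def by blast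
qed

definition regM :: "('u,'m) mobj" where
  "regM = regular M emb"

definition dec :: "'u \<Rightarrow> 'm" where
  "dec u = inv_into (carrier M) emb u"

definition ideal_obj :: "'m set \<Rightarrow> ('u,'m) mobj" where
  "ideal_obj a = (emb ` a, snd regM)"

definition left_mult :: "'m \<Rightarrow> 'u \<Rightarrow> 'u" where
  "left_mult y u = emb (y \<otimes> dec u)"

definition ideal_quot :: "'m set \<Rightarrow> 'm \<Rightarrow> 'm set" where
  "ideal_quot a y = {t \<in> carrier M. y \<otimes> t \<in> a}"

definition dense :: "'m set \<Rightarrow> bool" where
  "dense a \<longleftrightarrow> right_ideal M a \<and>
     (\<exists>v\<in>fst (R (ideal_obj a)). R_map (ideal_obj a) regM (\<lambda>x. x) v = \<eta> regM (emb \<one>))"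

lemma rmset_regM: "rmset M regM"
  unfolding regM_def using rmset_regular[OF monoid_axioms emb_inj] .

lemma fst_regM: "fst regM = emb ` carrier M"
  unfolding regM_def by (simp add: fst_regular)

lemma dec_emb [simp]: "s \<in> carrier M \<Longrightarrow> dec (emb s) = s"
  unfolding dec_def using emb_inj by simp

lemma regM_act: "s \<in> carrier M \<Longrightarrow> snd regM (emb s) t = emb (s \<otimes> t)"
  unfolding regM_def using regular_act[OF emb_inj] by simp

lemma one_in_regM: "emb \<one> \<in> fst regM"
  by (simp add: fst_regM)

lemma eta_one_in_R_regM: "\<eta> regM (emb \<one>) \<in> fst (R regM)"
  using mhomD(1)[OF mhom_eta[OF rmset_regM] one_in_regM] .

lemma right_idealD:
  "right_ideal M a \<Longrightarrow> a \<subseteq> carrier M"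
  "right_ideal M a \<Longrightarrow> s \<in> a \<Longrightarrow> t \<in> carrier M \<Longrightarrow> s \<otimes> t \<in> a"
  unfolding right_ideal_def by blast+

lemma right_ideal_carrier: "right_ideal M (carrier M)"
  unfolding right_ideal_def by simp

lemma right_ideal_quot: "right_ideal M a \<Longrightarrow> y \<in> carrier M \<Longrightarrow> right_ideal M (ideal_quot a y)"
  unfolding ideal_quot_def right_ideal_def by (auto simp: m_assoc[symmetric])

lemma fst_ideal_obj: "fst (ideal_obj a) = emb ` a"
  by (simp add: ideal_obj_def)

lemma snd_ideal_obj: "snd (ideal_obj a) = snd regM"
  by (simp add: ideal_obj_def)

lemma ideal_obj_carrier: "ideal_obj (carrier M) = regM"
  unfolding ideal_obj_def by (simp add: fst_regM[symmetric])

lemma rmset_ideal_obj: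
  assumes a: "right_ideal M a"
  shows "rmset M (ideal_obj a)"
  unfolding rmset_def fst_ideal_obj snd_ideal_obj
proof (intro conjI ballI)
  fix u t assume "u \<in> emb ` a" and t: "t \<in> carrier M"
  then obtain s where s: "s \<in> a" "u = emb s" by blast
  show "snd regM u t \<in> emb ` a"
    using s regM_act right_idealD[OF a] t by auto
next
  fix u assume "u \<in> emb ` a"
  hence "u \<in> fst regM" using right_idealD(1)[OF a] fst_regM by blast
  thus "snd regM u \<one> = u" using rmsetD(2)[OF rmset_regM] by simp
next
  fix u t r assume "u \<in> emb ` a" and t: "t \<in> carrier M" and r: "r \<in> carrier M"
  hence "u \<in> fst regM" using right_idealD(1)[OF a] fst_regM by blast
  thus "snd regM u (t \<otimes> r) = snd regM (snd regM u t) r" using rmsetD(3)[OF rmset_regM] t r by simp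
qed

lemma mhom_ideal_incl: "a \<subseteq> b \<Longrightarrow> mhom M (ideal_obj a) (ideal_obj b) (\<lambda>x. x)"
  unfolding mhom_def fst_ideal_obj snd_ideal_obj by auto

lemma mhom_ideal_regM: "right_ideal M a \<Longrightarrow> mhom M (ideal_obj a) regM (\<lambda>x. x)"
  using mhom_ideal_incl[of a "carrier M"] right_idealD(1) ideal_obj_carrier by metis

lemma mhom_left_mult: "y \<in> carrier M \<Longrightarrow> mhom M regM regM (left_mult y)"
  unfolding mhom_def fst_regM left_mult_def by (auto simp: regM_act m_assoc)

lemma mhom_left_mult_quot:
  "y \<in> carrier M \<Longrightarrow> mhom M (ideal_obj (ideal_quot a y)) (ideal_obj a) (left_mult y)"
  unfolding mhom_def fst_ideal_obj snd_ideal_obj left_mult_def ideal_quot_def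
  by (auto simp: regM_act m_assoc)

lemma denseD:
  assumes "dense a"
  shows "right_ideal M a"
    and "\<exists>v\<in>fst (R (ideal_obj a)). R_map (ideal_obj a) regM (\<lambda>x. x) v = \<eta> regM (emb \<one>)"
  using assms unfolding dense_def by blast+

lemma dense_carrier: "dense (carrier M)"
  unfolding dense_def ideal_obj_carrier
  using right_ideal_carrier R_map_id[OF rmset_regM eta_one_in_R_regM] eta_one_in_R_regM by blast

lemma dense_mono:
  assumes a: "dense a" and b: "right_ideal M b" and ab: "a \<subseteq> b"
  shows "dense b"
proof -
  have ra: "right_ideal M a" using denseD(1)[OF a] .
  obtain v where v: "v \<in> fst (R (ideal_obj a))" "R_map (ideal_obj a) regM (\<lambda>x. x) v = \<eta> regM (emb \<one>)"
    using denseD(2)[OF a] by blast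
  note incl = mhom_ideal_incl[OF ab]
  have "R_map (ideal_obj b) regM (\<lambda>x. x) (R_map (ideal_obj a) (ideal_obj b) (\<lambda>x. x) v) = \<eta> regM (emb \<one>)"
    using R_map_comp[OF rmset_ideal_obj[OF ra] rmset_ideal_obj[OF b] rmset_regM incl
        mhom_ideal_regM[OF b] v(1)] v(2) by simp
  moreover have "R_map (ideal_obj a) (ideal_obj b) (\<lambda>x. x) v \<in> fst (R (ideal_obj b))"
    using mhomD(1)[OF mhom_R_map[OF rmset_ideal_obj[OF ra] rmset_ideal_obj[OF b] incl] v(1)] .
  ultimately show ?thesis unfolding dense_def using b by blast
qed

lemma dense_of_pullback:
  assumes a: "right_ideal M a"
    and sq: "concrete_pullback M (ideal_obj a) (\<lambda>u. u) q regM X Y f g"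
    and w: "w \<in> fst (R X)" and eq: "R_map regM Y f (\<eta> regM (emb \<one>)) = R_map X Y g w"
  shows "dense a"
proof -
  obtain v where "v \<in> fst (R (ideal_obj a))" "R_map (ideal_obj a) regM (\<lambda>u. u) v = \<eta> regM (emb \<one>)"
    using concrete_pullbackD(11)[OF concrete_pullback_R[OF sq] eta_one_in_R_regM w eq] by blast
  thus ?thesis unfolding dense_def using a by blast
qed

lemma dense_quot:
  assumes da: "dense a" and y: "y \<in> carrier M"
  shows "dense (ideal_quot a y)"
proof -
  have a: "right_ideal M a" using denseD(1)[OF da] .
  have c: "right_ideal M (ideal_quot a y)" using right_ideal_quot[OF a y] .
  obtain va where va: "va \<in> fst (R (ideal_obj a))"
    "R_map (ideal_obj a) regM (\<lambda>x. x) va = \<eta> regM (emb \<one>)"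
    using denseD(2)[OF da] by blast
  have "concrete_pullback M (ideal_obj (ideal_quot a y)) (\<lambda>u. u) (left_mult y) regM (ideal_obj a)
      regM (left_mult y) (\<lambda>x. x)"
    unfolding concrete_pullback_def
  proof (intro conjI rmset_ideal_obj a c rmset_regM mhom_ideal_regM mhom_left_mult_quot
      mhom_left_mult y ballI impI)
    fix u s assume u: "u \<in> fst regM" and s: "s \<in> fst (ideal_obj a)" and e: "left_mult y u = s"
    obtain t where t: "t \<in> carrier M" "u = emb t" using u by (auto simp: fst_regM)
    have "y \<otimes> t \<in> a"
      using e s t y right_idealD(1)[OF a] inj_onD[OF emb_inj] unfolding left_mult_def
      by (auto simp: fst_ideal_obj)
    hence "u \<in> fst (ideal_obj (ideal_quot a y))" using t by (simp add: fst_ideal_obj ideal_quot_def)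
    thus "\<exists>x\<in>fst (ideal_obj (ideal_quot a y)). x = u \<and> left_mult y x = s" using e by blast
  qed simp_all
  moreover have "snd (R (ideal_obj a)) va y \<in> fst (R (ideal_obj a))"
    using rmsetD(1)[OF rmset_R[OF rmset_ideal_obj[OF a]] va(1) y] .
  moreover have "R_map regM regM (left_mult y) (\<eta> regM (emb \<one>)) =
      R_map (ideal_obj a) regM (\<lambda>x. x) (snd (R (ideal_obj a)) va y)"
  proof -
    have "R_map (ideal_obj a) regM (\<lambda>x. x) (snd (R (ideal_obj a)) va y) = snd (R regM) (\<eta> regM (emb \<one>)) y"
      using mhomD(2)[OF mhom_R_map[OF rmset_ideal_obj[OF a] rmset_regM mhom_ideal_regM[OF a]] va(1) y]
        va(2) by simp
    also have "\<dots> = \<eta> regM (emb y)"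
      using mhomD(2)[OF mhom_eta[OF rmset_regM] one_in_regM y] regM_act[OF one_closed] y by simp
    also have "\<dots> = R_map regM regM (left_mult y) (\<eta> regM (emb \<one>))"
      using R_map_eta[OF rmset_regM rmset_regM mhom_left_mult[OF y] one_in_regM] y
      unfolding left_mult_def by simp
    finally show ?thesis by simp
  qed
  ultimately show ?thesis using dense_of_pullback[OF c] by blast
qed

lemma eta_in_image_of_dense_quot:
  assumes c: "right_ideal M c" and y: "y \<in> carrier M" and dc: "dense (ideal_quot c y)"
  shows "\<eta> regM (emb y) \<in> R_map (ideal_obj c) regM (\<lambda>x. x) ` fst (R (ideal_obj c))"
proof -
  let ?q = "ideal_obj (ideal_quot c y)"
  have q: "rmset M ?q" using rmset_ideal_obj[OF right_ideal_quot[OF c y]] .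
  have C: "rmset M (ideal_obj c)" using rmset_ideal_obj[OF c] .
  obtain v where v: "v \<in> fst (R ?q)" "R_map ?q regM (\<lambda>x. x) v = \<eta> regM (emb \<one>)"
    using denseD(2)[OF dc] by blast
  let ?w = "R_map ?q (ideal_obj c) (left_mult y) v"
  have "R_map (ideal_obj c) regM (\<lambda>x. x) ?w = R_map ?q regM (left_mult y) v"
    using R_map_comp[OF q C rmset_regM mhom_left_mult_quot[OF y] mhom_ideal_regM[OF c] v(1)] by simp
  also have "\<dots> = R_map regM regM (left_mult y) (R_map ?q regM (\<lambda>x. x) v)"
    using R_map_comp[OF q rmset_regM rmset_regM mhom_ideal_regM[OF right_ideal_quot[OF c y]]
        mhom_left_mult[OF y] v(1)] by simp
  also have "\<dots> = \<eta> regM (emb y)"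
    using v(2) R_map_eta[OF rmset_regM rmset_regM mhom_left_mult[OF y] one_in_regM] y
    unfolding left_mult_def by simp
  finally show ?thesis
    using mhomD(1)[OF mhom_R_map[OF q C mhom_left_mult_quot[OF y]] v(1)] by (metis image_eqI)
qed

text \<open>A sub-M-set of R M lying in L that contains the units of all y in a dense b contains the unit
  of 1: the unit map of b factors through it, and R b \<rightarrow> R M sends the density witness to the
  unit of 1.\<close>

lemma unit_in_subobject_of_dense:
  assumes db: "dense b" and ZL: "Z \<in> L" and ZR: "fst Z \<subseteq> fst (R regM)" and Zact: "snd Z = snd (R regM)"
    and k: "\<And>y. y \<in> b \<Longrightarrow> \<eta> regM (emb y) \<in> fst Z"
  shows "\<eta> regM (emb \<one>) \<in> fst Z"
proof -
  have b: "right_ideal M b" using denseD(1)[OF db] .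
  have B: "rmset M (ideal_obj b)" using rmset_ideal_obj[OF b] .
  obtain vb where vb: "vb \<in> fst (R (ideal_obj b))"
    "R_map (ideal_obj b) regM (\<lambda>x. x) vb = \<eta> regM (emb \<one>)"
    using denseD(2)[OF db] by blast
  have "mhom M (ideal_obj b) Z (\<eta> regM)"
    unfolding mhom_def
  proof (intro conjI ballI)
    fix u s assume "u \<in> fst (ideal_obj b)" and s: "s \<in> carrier M"
    hence "u \<in> fst regM" using right_idealD(1)[OF b] by (auto simp: fst_ideal_obj fst_regM)
    thus "\<eta> regM (snd (ideal_obj b) u s) = snd Z (\<eta> regM u) s"
      using mhomD(2)[OF mhom_eta[OF rmset_regM] _ s] by (simp add: snd_ideal_obj Zact)
  qed (auto simp: fst_ideal_obj k)
  then obtain g where g: "mhom M (R (ideal_obj b)) Z g"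
    and ge: "\<forall>u\<in>fst (ideal_obj b). g (\<eta> (ideal_obj b) u) = \<eta> regM u"
    using reflection_factor[OF reflection B ZL] by blast
  have "g vb = R_map (ideal_obj b) regM (\<lambda>x. x) vb"
  proof (rule reflection_hom_eqI[OF reflection B R_in_L[OF rmset_regM]
        mhom_into_superset[OF g ZR Zact] mhom_R_map[OF B rmset_regM mhom_ideal_regM[OF b]] _ vb(1)])
    fix u assume u: "u \<in> fst (ideal_obj b)"
    show "g (\<eta> (ideal_obj b) u) = R_map (ideal_obj b) regM (\<lambda>x. x) (\<eta> (ideal_obj b) u)"
      using ge u R_map_eta[OF B rmset_regM mhom_ideal_regM[OF b] u] by simp
  qed
  thus ?thesis using vb(2) mhomD(1)[OF g vb(1)] by simp
qed

text \<open>The Grothendieck axiom (T3) for dense ideals. The image of R c in R M lies in L, as R preserves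
  monomorphisms.\<close>

lemma dense_local:
  assumes db: "dense b" and c: "right_ideal M c"
    and dc: "\<And>y. y \<in> b \<Longrightarrow> dense (ideal_quot c y)"
  shows "dense c"
proof -
  have C: "rmset M (ideal_obj c)" using rmset_ideal_obj[OF c] .
  let ?i = "R_map (ideal_obj c) regM (\<lambda>x. x)"
  have i: "mhom M (R (ideal_obj c)) (R regM) ?i"
    using mhom_R_map[OF C rmset_regM mhom_ideal_regM[OF c]] .
  let ?Z = "(?i ` fst (R (ideal_obj c)), snd (R regM))"
  have "?Z \<in> L"
    by (rule image_in_L[OF R_in_L[OF C] i R_map_inj[OF C rmset_regM mhom_ideal_regM[OF c]]])
       (simp add: inj_on_def)
  hence "\<eta> regM (emb \<one>) \<in> fst ?Z"
    by (rule unit_in_subobject_of_dense[OF db])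
       (use mhomD(1)[OF i] eta_in_image_of_dense_quot[OF c _ dc] right_idealD(1)[OF denseD(1)[OF db]]
         in auto)
  thus "dense c" unfolding dense_def using c by auto
qed

lemma dense_Int:
  assumes da: "dense a" and db: "dense b"
  shows "dense (a \<inter> b)"
proof (rule dense_local[OF db])
  show ab: "right_ideal M (a \<inter> b)"
    using denseD(1)[OF da] denseD(1)[OF db] unfolding right_ideal_def by blast
  fix y assume y: "y \<in> b"
  have "ideal_quot a y \<subseteq> ideal_quot (a \<inter> b) y"
    using y right_idealD(2)[OF denseD(1)[OF db]] unfolding ideal_quot_def by blast
  thus "dense (ideal_quot (a \<inter> b) y)"
    using dense_mono[OF dense_quot[OF da] right_ideal_quot[OF ab]] y right_idealD(1)[OF denseD(1)[OF db]]
    by blast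
qed

text \<open>M is finite, so the dense ideals have a least element.\<close>

definition least_dense :: "'m set" where
  "least_dense = \<Inter>{a. dense a}"

lemma finite_dense: "finite {a. dense a}"
proof (rule finite_subset[of _ "Pow (carrier M)"])
  show "{a. dense a} \<subseteq> Pow (carrier M)" using denseD(1) right_idealD(1) by blast
qed (simp add: finite_carrier)

lemma dense_Inter: "finite F \<Longrightarrow> F \<noteq> {} \<Longrightarrow> F \<subseteq> {a. dense a} \<Longrightarrow> dense (\<Inter>F)"
proof (induction F rule: finite_ne_induct)
  case (insert x F) thus ?case using dense_Int by simp
qed simp

lemma dense_least_dense: "dense least_dense"
  unfolding least_dense_def using dense_Inter[OF finite_dense] dense_carrier by blast

lemma least_dense_subset: "dense a \<Longrightarrow> least_dense \<subseteq> a"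
  unfolding least_dense_def by blast

lemma right_ideal_least_dense: "right_ideal M least_dense"
  using denseD(1)[OF dense_least_dense] .

lemma two_sided_least_dense: "two_sided_ideal M least_dense"
  unfolding two_sided_ideal_def
proof (intro conjI right_ideal_least_dense ballI)
  fix x y assume "x \<in> least_dense" and y: "y \<in> carrier M"
  thus "y \<otimes> x \<in> least_dense"
    using least_dense_subset[OF dense_quot[OF dense_least_dense y]] unfolding ideal_quot_def by blast
qed

text \<open>Idempotence: the products of two elements of the least dense ideal form a right ideal whose
  quotients by elements of the least dense ideal are dense, so it is dense by (T3).\<close>

lemma least_dense_idempotent: "least_dense = {x \<otimes> y | x y. x \<in> least_dense \<and> y \<in> least_dense}"
proof -
  let ?m = least_dense
  define m2 where "m2 = {x \<otimes> y | x y. x \<in> ?m \<and> y \<in> ?m}"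
  note m = right_idealD[OF right_ideal_least_dense]
  have sub: "m2 \<subseteq> ?m" unfolding m2_def using m by blast
  have r2: "right_ideal M m2" unfolding right_ideal_def
  proof (intro conjI ballI)
    show "m2 \<subseteq> carrier M" using sub m(1) by blast
  next
    fix z t assume "z \<in> m2" and t: "t \<in> carrier M"
    then obtain x y where xy: "x \<in> ?m" "y \<in> ?m" "z = x \<otimes> y" unfolding m2_def by blast
    have "z \<otimes> t = x \<otimes> (y \<otimes> t)" using xy t m(1) by (simp add: m_assoc subsetD)
    thus "z \<otimes> t \<in> m2" unfolding m2_def using xy(1) m(2)[OF xy(2) t] by blast
  qed
  have "dense m2"
  proof (rule dense_local[OF dense_least_dense r2])
    fix y assume y: "y \<in> ?m"
    have "?m \<subseteq> ideal_quot m2 y" unfolding ideal_quot_def m2_def using y m(1) by blast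
    thus "dense (ideal_quot m2 y)"
      using dense_mono[OF dense_least_dense right_ideal_quot[OF r2]] y m(1) by blast
  qed
  thus ?thesis using sub least_dense_subset unfolding m2_def by blast
qed

lemma least_dense_idem_ideals: "least_dense \<in> idem_ideals M"
  unfolding idem_ideals_def using two_sided_least_dense least_dense_idempotent by blast

end

sublocale localising_reflector \<subseteq> least: idempotent_ideal M least_dense
  by unfold_locales (rule two_sided_least_dense, rule least_dense_idempotent)

context localising_reflector
begin

lemma density_witness_act:
  assumes v: "v \<in> fst (R (ideal_obj least_dense))"
    and v1: "R_map (ideal_obj least_dense) regM (\<lambda>x. x) v = \<eta> regM (emb \<one>)"
    and s: "s \<in> least_dense"
  shows "snd (R (ideal_obj least_dense)) v s = \<eta> (ideal_obj least_dense) (emb s)"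
proof -
  let ?A = "ideal_obj least_dense" and ?i = "R_map (ideal_obj least_dense) regM (\<lambda>x. x)"
  have A: "rmset M ?A" using rmset_ideal_obj[OF right_ideal_least_dense] .
  have sM: "s \<in> carrier M" using s right_idealD(1)[OF right_ideal_least_dense] by blast
  have u: "emb s \<in> fst ?A" using s by (simp add: fst_ideal_obj)
  have i: "mhom M (R ?A) (R regM) ?i" using mhom_R_map[OF A rmset_regM mhom_ideal_regM] right_ideal_least_dense .
  have "?i (snd (R ?A) v s) = snd (R regM) (\<eta> regM (emb \<one>)) s"
    using mhomD(2)[OF i v sM] v1 by simp
  also have "\<dots> = \<eta> regM (emb s)"
    using mhomD(2)[OF mhom_eta[OF rmset_regM] one_in_regM sM] regM_act[OF one_closed] sM by simp
  also have "\<dots> = ?i (\<eta> ?A (emb s))"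
    using R_map_eta[OF A rmset_regM mhom_ideal_regM[OF right_ideal_least_dense] u] by simp
  finally show ?thesis
    using inj_onD[OF R_map_inj[OF A rmset_regM mhom_ideal_regM[OF right_ideal_least_dense]]]
      rmsetD(1)[OF rmset_R[OF A] v sM] mhomD(1)[OF mhom_eta[OF A] u] by (simp add: inj_on_def)
qed

lemma separated_of_L:
  assumes BL: "B \<in> L"
  shows "separated M least_dense B"
  unfolding separated_def
proof (intro ballI impI)
  fix x x' assume x: "x \<in> fst B" and x': "x' \<in> fst B" and eq: "\<forall>y\<in>least_dense. snd B x y = snd B x' y"
  let ?A = "ideal_obj least_dense" and ?i = "R_map (ideal_obj least_dense) regM (\<lambda>x. x)"
  have B: "rmset M B" using rmset_of_L[OF BL] .
  have A: "rmset M ?A" using rmset_ideal_obj[OF right_ideal_least_dense] .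
  obtain v where v: "v \<in> fst (R ?A)" "?i v = \<eta> regM (emb \<one>)"
    using denseD(2)[OF dense_least_dense] by blast
  note orb = mhom_orbit_map[OF monoid_axioms emb_inj B, folded regM_def]
  obtain g where g: "mhom M (R regM) B g" and ge: "\<forall>u\<in>fst regM. g (\<eta> regM u) = orbit_map M emb B x u"
    using reflection_factor[OF reflection rmset_regM BL orb[OF x]] by blast
  obtain g' where g': "mhom M (R regM) B g'"
    and ge': "\<forall>u\<in>fst regM. g' (\<eta> regM u) = orbit_map M emb B x' u"
    using reflection_factor[OF reflection rmset_regM BL orb[OF x']] by blast
  have i: "mhom M (R ?A) (R regM) ?i" using mhom_R_map[OF A rmset_regM mhom_ideal_regM] right_ideal_least_dense .
  have "g (?i v) = g' (?i v)"
  proof (rule reflection_hom_eqI[OF reflection A BL mhom_comp[OF i g] mhom_comp[OF i g'] _ v(1)])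
    fix u assume u: "u \<in> fst ?A"
    then obtain s where s: "s \<in> least_dense" "u = emb s" by (auto simp: fst_ideal_obj)
    have sM: "s \<in> carrier M" using s(1) right_idealD(1)[OF right_ideal_least_dense] by blast
    have "?i (\<eta> ?A u) = \<eta> regM u"
      using R_map_eta[OF A rmset_regM mhom_ideal_regM[OF right_ideal_least_dense] u] by simp
    moreover have "u \<in> fst regM" using s sM by (simp add: fst_regM)
    ultimately show "g (?i (\<eta> ?A u)) = g' (?i (\<eta> ?A u))"
      using ge ge' s sM eq orbit_map_apply[OF emb_inj sM, of B] by simp
  qed
  thus "x = x'"
    using v(2) ge ge' one_in_regM orbit_map_one[OF monoid_axioms emb_inj B] x x' by simp
qed

lemma extensible_of_L:
  assumes BL: "B \<in> L"
  shows "extensible M least_dense B"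
  unfolding extensible_def
proof (intro allI impI)
  fix \<phi> assume ph: "mhom M (least_dense, mult M) B \<phi>"
  let ?A = "ideal_obj least_dense"
  have A: "rmset M ?A" using rmset_ideal_obj[OF right_ideal_least_dense] .
  have mM: "\<And>s. s \<in> least_dense \<Longrightarrow> s \<in> carrier M"
    using right_idealD(1)[OF right_ideal_least_dense] by blast
  obtain v where v: "v \<in> fst (R ?A)" "R_map ?A regM (\<lambda>x. x) v = \<eta> regM (emb \<one>)"
    using denseD(2)[OF dense_least_dense] by blast
  have "mhom M ?A B (\<lambda>u. \<phi> (dec u))"
    unfolding mhom_def fst_ideal_obj snd_ideal_obj
    using mhomD[OF ph] mM by (auto simp: regM_act)
  then obtain g where g: "mhom M (R ?A) B g" and ge: "\<forall>u\<in>fst ?A. g (\<eta> ?A u) = \<phi> (dec u)"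
    using reflection_factor[OF reflection A BL] by blast
  have "\<phi> s = snd B (g v) s" if s: "s \<in> least_dense" for s
    using mhomD(2)[OF g v(1) mM[OF s]] density_witness_act[OF v s] ge mM[OF s] s
    by (simp add: fst_ideal_obj)
  thus "\<exists>x\<in>fst B. \<forall>y\<in>least_dense. \<phi> y = snd B x y" using mhomD(1)[OF g v(1)] by blast
qed

lemma is_sheaf_of_L: "B \<in> L \<Longrightarrow> is_sheaf M (topF M least_dense) B"
  using least.is_sheaf_iff rmset_of_L separated_of_L extensible_of_L by blast

definition pair_obj :: "('u,'m) mobj \<Rightarrow> ('u,'m) mobj" where
  "pair_obj X = transport pr (fst X \<times> fst X, \<lambda>p s. (snd X (fst p) s, snd X (snd p) s))"

definition proj1 :: "'u \<Rightarrow> 'u" where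
  "proj1 u = fst (inv_into UNIV pr u)"

definition proj2 :: "'u \<Rightarrow> 'u" where
  "proj2 u = snd (inv_into UNIV pr u)"

lemma proj_pr [simp]: "proj1 (pr p) = fst p" "proj2 (pr p) = snd p"
  unfolding proj1_def proj2_def using pr_inj by simp_all

lemma fst_pair_obj: "fst (pair_obj X) = pr ` (fst X \<times> fst X)"
  by (simp add: pair_obj_def)

lemma pair_obj_act:
  "a \<in> fst X \<Longrightarrow> b \<in> fst X \<Longrightarrow> snd (pair_obj X) (pr (a, b)) s = pr (snd X a s, snd X b s)"
  unfolding pair_obj_def
  by (subst transport_act[OF inj_on_subset[OF pr_inj subset_UNIV]]) simp_all

lemma rmset_pair_obj:
  assumes X: "rmset M X"
  shows "rmset M (pair_obj X)"
  unfolding pair_obj_def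
proof (rule rmset_transport[OF inj_on_subset[OF pr_inj subset_UNIV] _ monoid_axioms])
  show "rmset M (fst X \<times> fst X, \<lambda>p s. (snd X (fst p) s, snd X (snd p) s))"
    unfolding rmset_def using rmsetD[OF X] by auto
qed

lemma mhom_proj:
  "mhom M (pair_obj X) X proj1" "mhom M (pair_obj X) X proj2"
  unfolding mhom_def fst_pair_obj by (auto simp: pair_obj_act)

lemma mhom_diag: "mhom M X (pair_obj X) (\<lambda>y. pr (y, y))"
  unfolding mhom_def fst_pair_obj by (auto simp: pair_obj_act)

text \<open>The projections of R(X \<times> X) are jointly injective because R preserves the product, which is
  the pullback over a one-point M-set.\<close>

lemma R_proj_jointly_inj:
  assumes X: "rmset M X" and w: "w \<in> fst (R (pair_obj X))" and w': "w' \<in> fst (R (pair_obj X))"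
    and eq1: "R_map (pair_obj X) X proj1 w = R_map (pair_obj X) X proj1 w'"
    and eq2: "R_map (pair_obj X) X proj2 w = R_map (pair_obj X) X proj2 w'"
  shows "w = w'"
proof -
  define T :: "('u,'m) mobj" where "T = ({emb \<one>}, \<lambda>_ _. emb \<one>)"
  have T: "rmset M T" unfolding T_def rmset_def by simp
  have c: "mhom M X T (\<lambda>_. emb \<one>)" unfolding T_def mhom_def by simp
  have "concrete_pullback M (pair_obj X) proj1 proj2 X X T (\<lambda>_. emb \<one>) (\<lambda>_. emb \<one>)"
    unfolding concrete_pullback_def
    using rmset_pair_obj[OF X] X T mhom_proj c
    by (auto simp: fst_pair_obj prod_eq_iff)
  from concrete_pullbackD(10)[OF concrete_pullback_R[OF this] w w' eq1 eq2] show ?thesis .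
qed

definition equaliser_ideal :: "('u,'m) mobj \<Rightarrow> 'u \<Rightarrow> 'u \<Rightarrow> 'm set" where
  "equaliser_ideal X x x' = {s \<in> carrier M. snd X x s = snd X x' s}"

lemma right_ideal_equaliser: "rmset M X \<Longrightarrow> x \<in> fst X \<Longrightarrow> x' \<in> fst X \<Longrightarrow>
    right_ideal M (equaliser_ideal X x x')"
  unfolding right_ideal_def equaliser_ideal_def using rmsetD(3) by fastforce

lemma equaliser_pullback:
  assumes X: "rmset M X" and x: "x \<in> fst X" and x': "x' \<in> fst X"
  shows "concrete_pullback M (ideal_obj (equaliser_ideal X x x')) (\<lambda>u. u) (\<lambda>u. snd X x (dec u))
    regM X (pair_obj X) (\<lambda>u. pr (snd X x (dec u), snd X x' (dec u))) (\<lambda>y. pr (y, y))"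
proof -
  let ?a = "equaliser_ideal X x x'"
  have a: "right_ideal M ?a" using right_ideal_equaliser[OF X x x'] .
  have aM: "?a \<subseteq> carrier M" unfolding equaliser_ideal_def by blast
  have q: "mhom M (ideal_obj ?a) X (\<lambda>u. snd X x (dec u))"
    unfolding mhom_def fst_ideal_obj snd_ideal_obj
    using aM rmsetD(1,3)[OF X x] by (auto simp: regM_act)
  have f: "mhom M regM (pair_obj X) (\<lambda>u. pr (snd X x (dec u), snd X x' (dec u)))"
    unfolding mhom_def fst_regM fst_pair_obj
    using rmsetD(1,3)[OF X x] rmsetD(1,3)[OF X x'] by (auto simp: regM_act pair_obj_act)
  show ?thesis
    unfolding concrete_pullback_def
  proof (intro conjI rmset_ideal_obj[OF a] rmset_regM X rmset_pair_obj[OF X] mhom_ideal_regM[OF a]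
      q f mhom_diag ballI impI)
    fix u assume "u \<in> fst (ideal_obj ?a)"
    thus "pr (snd X x (dec u), snd X x' (dec u)) = pr (snd X x (dec u), snd X x (dec u))"
      using aM unfolding equaliser_ideal_def by (auto simp: fst_ideal_obj)
  next
    fix u y assume u: "u \<in> fst regM" and "y \<in> fst X"
      and e: "pr (snd X x (dec u), snd X x' (dec u)) = pr (y, y)"
    obtain s where s: "s \<in> carrier M" "u = emb s" using u by (auto simp: fst_regM)
    have "snd X x s = y" "snd X x' s = y" using injD[OF pr_inj e] s by simp_all
    hence "u \<in> fst (ideal_obj ?a)" using s by (simp add: fst_ideal_obj equaliser_ideal_def)
    thus "\<exists>v\<in>fst (ideal_obj ?a). v = u \<and> snd X x (dec v) = y" using \<open>snd X x s = y\<close> s by auto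
  qed auto
qed

lemma eta_inj_on_sheaf:
  assumes sh: "is_sheaf M (topF M least_dense) X" and x: "x \<in> fst X" and x': "x' \<in> fst X"
    and eq: "\<eta> X x = \<eta> X x'"
  shows "x = x'"
proof -
  have X: "rmset M X" and sep: "separated M least_dense X" using sh least.is_sheaf_iff by blast+
  let ?P = "pair_obj X" and ?f = "\<lambda>u. pr (snd X x (dec u), snd X x' (dec u))"
  have P: "rmset M ?P" using rmset_pair_obj[OF X] .
  have xx: "pr (x, x') \<in> fst ?P" "pr (x, x) \<in> fst ?P" using x x' by (auto simp: fst_pair_obj)
  have "\<eta> ?P (pr (x, x')) = \<eta> ?P (pr (x, x))"
    using R_proj_jointly_inj[OF X mhomD(1)[OF mhom_eta[OF P] xx(1)] mhomD(1)[OF mhom_eta[OF P] xx(2)]]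
      R_map_eta[OF P X mhom_proj(1)] R_map_eta[OF P X mhom_proj(2)] xx eq by simp
  moreover have "R_map regM ?P ?f (\<eta> regM (emb \<one>)) = \<eta> ?P (pr (x, x'))"
    using R_map_eta[OF rmset_regM P _ one_in_regM] equaliser_pullback[OF X x x'] rmsetD(2)[OF X] x x'
    unfolding concrete_pullback_def by simp
  moreover have "R_map X ?P (\<lambda>y. pr (y, y)) (\<eta> X x) = \<eta> ?P (pr (x, x))"
    using R_map_eta[OF X P mhom_diag x] .
  ultimately have "dense (equaliser_ideal X x x')"
    using dense_of_pullback[OF right_ideal_equaliser[OF X x x'] equaliser_pullback[OF X x x']
        mhomD(1)[OF mhom_eta[OF X] x]] by simp
  hence "\<forall>s\<in>least_dense. snd X x s = snd X x' s"
    using least_dense_subset unfolding equaliser_ideal_def by blast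
  thus "x = x'" using separatedD[OF sep x x'] by blast
qed

definition preimage_ideal :: "('u,'m) mobj \<Rightarrow> 'u \<Rightarrow> 'm set" where
  "preimage_ideal X z = {s \<in> carrier M. snd (R X) z s \<in> \<eta> X ` fst X}"

definition preimage_map :: "('u,'m) mobj \<Rightarrow> 'u \<Rightarrow> 'u \<Rightarrow> 'u" where
  "preimage_map X z u = inv_into (fst X) (\<eta> X) (snd (R X) z (dec u))"

lemma right_ideal_preimage:
  assumes X: "rmset M X" and z: "z \<in> fst (R X)"
  shows "right_ideal M (preimage_ideal X z)"
  unfolding right_ideal_def
proof (intro conjI ballI)
  fix s t assume "s \<in> preimage_ideal X z" and t: "t \<in> carrier M"
  then obtain x0 where s: "s \<in> carrier M" and x0: "x0 \<in> fst X" "snd (R X) z s = \<eta> X x0"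
    unfolding preimage_ideal_def by blast
  have "snd (R X) z (s \<otimes> t) = \<eta> X (snd X x0 t)"
    using rmsetD(3)[OF rmset_R[OF X] z s t] x0 mhomD(2)[OF mhom_eta[OF X] x0(1) t] by simp
  thus "s \<otimes> t \<in> preimage_ideal X z"
    using rmsetD(1)[OF X x0(1) t] s t unfolding preimage_ideal_def by auto
qed (auto simp: preimage_ideal_def)

lemma preimage_map_emb:
  assumes X: "rmset M X" and inj: "inj_on (\<eta> X) (fst X)" and s: "s \<in> preimage_ideal X z"
  shows "preimage_map X z (emb s) \<in> fst X" "\<eta> X (preimage_map X z (emb s)) = snd (R X) z s"
  using s unfolding preimage_map_def preimage_ideal_def
  by (auto simp: inv_into_into f_inv_into_f)

lemma preimage_pullback:
  assumes X: "rmset M X" and inj: "inj_on (\<eta> X) (fst X)" and z: "z \<in> fst (R X)"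
  shows "concrete_pullback M (ideal_obj (preimage_ideal X z)) (\<lambda>u. u) (preimage_map X z)
    regM X (R X) (orbit_map M emb (R X) z) (\<eta> X)"
proof -
  let ?a = "preimage_ideal X z" and ?q = "preimage_map X z" and ?\<zeta> = "orbit_map M emb (R X) z"
  have a: "right_ideal M ?a" using right_ideal_preimage[OF X z] .
  have aM: "?a \<subseteq> carrier M" using right_idealD(1)[OF a] .
  note q = preimage_map_emb[OF X inj]
  have \<zeta>: "?\<zeta> (emb s) = snd (R X) z s" if "s \<in> carrier M" for s
    using orbit_map_apply[OF emb_inj that] .
  have qh: "mhom M (ideal_obj ?a) X ?q"
    unfolding mhom_def
  proof (intro conjI ballI)
    fix u t assume "u \<in> fst (ideal_obj ?a)" and t: "t \<in> carrier M"
    then obtain s where s: "s \<in> ?a" "u = emb s" by (auto simp: fst_ideal_obj)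
    have sM: "s \<in> carrier M" using s aM by blast
    have st: "s \<otimes> t \<in> ?a" using right_idealD(2)[OF a s(1) t] .
    have "\<eta> X (?q (emb (s \<otimes> t))) = \<eta> X (snd X (?q (emb s)) t)"
      using q[OF st] q[OF s(1)] rmsetD(3)[OF rmset_R[OF X] z sM t] mhomD(2)[OF mhom_eta[OF X] _ t]
      by simp
    hence "?q (emb (s \<otimes> t)) = snd X (?q (emb s)) t"
      using inj_onD[OF inj] q[OF st] q[OF s(1)] rmsetD(1)[OF X _ t] by blast
    thus "?q (snd (ideal_obj ?a) u t) = snd X (?q u) t"
      using s(2) regM_act[OF sM] by (simp add: snd_ideal_obj)
  qed (auto simp: fst_ideal_obj q)
  show ?thesis
    unfolding concrete_pullback_def
  proof (intro conjI rmset_ideal_obj[OF a] rmset_regM X rmset_R[OF X] mhom_ideal_regM[OF a] qh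
      mhom_orbit_map[OF monoid_axioms emb_inj rmset_R[OF X] z, folded regM_def] mhom_eta[OF X]
      ballI impI)
    fix u assume "u \<in> fst (ideal_obj ?a)"
    then obtain s where "s \<in> ?a" "u = emb s" by (auto simp: fst_ideal_obj)
    thus "?\<zeta> u = \<eta> X (?q u)" using q \<zeta> aM by auto
  next
    fix u y assume u: "u \<in> fst regM" and y: "y \<in> fst X" and e: "?\<zeta> u = \<eta> X y"
    obtain s where s: "s \<in> carrier M" "u = emb s" using u by (auto simp: fst_regM)
    have sa: "s \<in> ?a" using s e \<zeta>[OF s(1)] y unfolding preimage_ideal_def by auto
    have "?q u = y" using inj_onD[OF inj _ q(1)[OF sa] y] q(2)[OF sa] \<zeta>[OF s(1)] e s(2) by simp
    thus "\<exists>v\<in>fst (ideal_obj ?a). v = u \<and> ?q v = y" using sa s(2) by (auto simp: fst_ideal_obj)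
  qed auto
qed

lemma eta_surj_on_sheaf:
  assumes sh: "is_sheaf M (topF M least_dense) X" and z: "z \<in> fst (R X)"
  shows "\<exists>x\<in>fst X. \<eta> X x = z"
proof -
  have X: "rmset M X" and ext: "extensible M least_dense X" using sh least.is_sheaf_iff by blast+
  have inj: "inj_on (\<eta> X) (fst X)" using eta_inj_on_sheaf[OF sh] by (simp add: inj_on_def)
  let ?a = "preimage_ideal X z" and ?q = "preimage_map X z"
  note q = preimage_map_emb[OF X inj]
  have "R_map regM (R X) (orbit_map M emb (R X) z) (\<eta> regM (emb \<one>)) = \<eta> (R X) z"
    using R_map_eta[OF rmset_regM rmset_R[OF X] _ one_in_regM]
      mhom_orbit_map[OF monoid_axioms emb_inj rmset_R[OF X] z, folded regM_def]
      orbit_map_one[OF monoid_axioms emb_inj rmset_R[OF X] z] by simp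
  hence "dense ?a"
    using dense_of_pullback[OF right_ideal_preimage[OF X z] preimage_pullback[OF X inj z] z]
      R_map_eta_self[OF X z] by simp
  hence sub: "least_dense \<subseteq> ?a" using least_dense_subset by blast
  have "mhom M (least_dense, mult M) X (\<lambda>s. ?q (emb s))"
    unfolding mhom_def
  proof (intro conjI ballI)
    fix s t assume "s \<in> fst (least_dense, mult M)" and t: "t \<in> carrier M"
    hence s: "s \<in> ?a" and sM: "s \<in> carrier M"
      using sub right_idealD(1)[OF right_ideal_least_dense] by auto
    have "?q (snd (ideal_obj ?a) (emb s) t) = snd X (?q (emb s)) t"
      using mhomD(2)[OF concrete_pullbackD(6)[OF preimage_pullback[OF X inj z]] _ t] s
      by (simp add: fst_ideal_obj)
    thus "?q (emb (snd (least_dense, mult M) s t)) = snd X (?q (emb s)) t"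
      using regM_act[OF sM] by (simp add: snd_ideal_obj)
  qed (use q sub in auto)
  then obtain x0 where x0: "x0 \<in> fst X" and hx: "\<forall>s\<in>least_dense. ?q (emb s) = snd X x0 s"
    using extensibleD[OF ext] by blast
  have "\<eta> X x0 = z"
  proof (rule separatedD[OF separated_of_L[OF R_in_L[OF X]] mhomD(1)[OF mhom_eta[OF X] x0] z])
    fix s assume s: "s \<in> least_dense"
    hence sM: "s \<in> carrier M" using right_idealD(1)[OF right_ideal_least_dense] by blast
    have "snd (R X) (\<eta> X x0) s = \<eta> X (?q (emb s))"
      using mhomD(2)[OF mhom_eta[OF X] x0 sM] hx s by simp
    also have "\<dots> = snd (R X) z s" using q(2) sub s by blast
    finally show "snd (R X) (\<eta> X x0) s = snd (R X) z s" .
  qed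
  thus ?thesis using x0 by blast
qed

lemma sheaf_in_L:
  assumes sh: "is_sheaf M (topF M least_dense) X"
  shows "X \<in> L"
proof -
  have X: "rmset M X" using sh unfolding is_sheaf_def by blast
  have inj: "inj_on (\<eta> X) (fst X)" using eta_inj_on_sheaf[OF sh] by (simp add: inj_on_def)
  have im: "\<eta> X ` fst X = fst (R X)"
    using eta_surj_on_sheaf[OF sh] mhomD(1)[OF mhom_eta[OF X]] by blast
  have "mhom M (R X) X (inv_into (fst X) (\<eta> X))"
    unfolding mhom_def
  proof (intro conjI ballI)
    fix w s assume "w \<in> fst (R X)" and s: "s \<in> carrier M"
    then obtain x where x: "x \<in> fst X" "w = \<eta> X x" using im by blast
    show "inv_into (fst X) (\<eta> X) (snd (R X) w s) = snd X (inv_into (fst X) (\<eta> X) w) s"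
      using x mhomD(2)[OF mhom_eta[OF X] x(1) s, symmetric] inv_into_f_f[OF inj]
        rmsetD(1)[OF X x(1) s] by simp
  qed (use im in \<open>auto intro: inv_into_into\<close>)
  hence "miso M (R X) X"
    unfolding miso_def using mhom_eta[OF X] inv_into_f_f[OF inj] f_inv_into_f[of _ "\<eta> X" "fst X"] im
    by (intro exI[of _ "inv_into (fst X) (\<eta> X)"] exI[of _ "\<eta> X"]) auto
  thus ?thesis using full_replete R_in_L[OF X] X unfolding full_replete_def by blast
qed

theorem L_eq_Sh: "L = Sh M (topF M least_dense)"
  unfolding Sh_def using is_sheaf_of_L sheaf_in_L by blast

end

section \<open>Distinct idempotent ideals have distinct sheaves\<close>

definition rees :: "('m,'b) monoid_scheme \<Rightarrow> 'm set \<Rightarrow> ('m option,'m) mobj" where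
  "rees M J = (Some ` (carrier M - J) \<union> {None},
     \<lambda>w s. (case w of None \<Rightarrow> None | Some x \<Rightarrow> if x \<otimes>\<^bsub>M\<^esub> s \<in> J then None else Some (x \<otimes>\<^bsub>M\<^esub> s)))"

lemma rmset_rees:
  assumes M: "monoid M" and J: "right_ideal M J"
  shows "rmset M (rees M J)"
proof -
  interpret monoid M by fact
  show ?thesis unfolding rmset_def
  proof (intro conjI ballI)
    fix w s t assume w: "w \<in> fst (rees M J)" and s: "s \<in> carrier M" and t: "t \<in> carrier M"
    show "snd (rees M J) w (s \<otimes>\<^bsub>M\<^esub> t) = snd (rees M J) (snd (rees M J) w s) t"
    proof (cases w)
      case (Some x)
      hence x: "x \<in> carrier M" using w by (auto simp: rees_def)
      have "x \<otimes>\<^bsub>M\<^esub> s \<in> J \<Longrightarrow> x \<otimes>\<^bsub>M\<^esub> (s \<otimes>\<^bsub>M\<^esub> t) \<in> J"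
        using J t x s unfolding right_ideal_def by (metis m_assoc)
      thus ?thesis using Some x s t by (simp add: rees_def m_assoc)
    qed (simp add: rees_def)
  qed (auto simp: rees_def split: option.splits)
qed

lemma finite_rees: "finite (carrier M) \<Longrightarrow> finite (fst (rees M J))"
  by (simp add: rees_def)

lemma transport_rees_act:
  assumes M: "monoid M" and f: "inj_on f (fst (rees M J))" and J: "\<one>\<^bsub>M\<^esub> \<notin> J"
  shows "s \<in> carrier M \<Longrightarrow>
      snd (transport f (rees M J)) (f (Some \<one>\<^bsub>M\<^esub>)) s = f (if s \<in> J then None else Some s)"
    and "snd (transport f (rees M J)) (f None) s = f None"
  using transport_act[OF f, of "Some \<one>\<^bsub>M\<^esub>" s] transport_act[OF f, of None s] J
  by (simp_all add: rees_def monoid.one_closed[OF M] monoid.l_one[OF M])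

context sheafification
begin

text \<open>Sheafifying M/J for I identifies the classes of 1 and of J, as they agree after acting by J;
  by idempotence of I, the classes of 1 and J then agree after acting by any element of I.\<close>

lemma ideal_subset_of_Sh_subset:
  fixes J :: "'m set" and f :: "'m option \<Rightarrow> 'u"
  assumes J: "right_ideal M J" and f: "inj_on f (fst (rees M J))"
    and sub: "(Sh M (topF M I) :: ('u,'m) mobj set) \<subseteq> Sh M (topF M J)"
  shows "I \<subseteq> J"
proof (cases "\<one> \<in> J")
  case True
  hence "carrier M \<subseteq> J" using J unfolding right_ideal_def by (metis l_one subsetI)
  thus ?thesis using ideal_carrier by blast
next
  case False
  define T where "T = transport f (rees M J)"
  have T: "rmset M T" unfolding T_def using rmset_transport[OF f rmset_rees[OF monoid_axioms J] monoid_axioms] .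
  have none: "None \<in> fst (rees M J)" by (simp add: rees_def)
  have q: "f (Some \<one>) \<in> fst T" and z: "f None \<in> fst T" unfolding T_def using False by (auto simp: rees_def)
  note act_one = transport_rees_act(1)[OF monoid_axioms f False, folded T_def]
  note act_none = transport_rees_act(2)[OF monoid_axioms f False, folded T_def]
  have "is_sheaf M (topF M J) (sheafify T)"
    using sub is_sheaf_sheafify[OF T] unfolding Sh_def by blast
  moreover have "J \<in> topF M J" unfolding topF_def using J by blast
  ultimately have sepJ: "separated M J (sheafify T)" unfolding is_sheaf_def separated_def by blast
  have "sheafify_unit T (f (Some \<one>)) = sheafify_unit T (f None)"
  proof (rule separatedD[OF sepJ mhomD(1)[OF mhom_sheafify_unit[OF T] q] mhomD(1)[OF mhom_sheafify_unit[OF T] z]])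
    fix y assume y: "y \<in> J"
    hence yM: "y \<in> carrier M" using J unfolding right_ideal_def by blast
    show "snd (sheafify T) (sheafify_unit T (f (Some \<one>))) y = snd (sheafify T) (sheafify_unit T (f None)) y"
      using mhomD(2)[OF mhom_sheafify_unit[OF T] q yM] mhomD(2)[OF mhom_sheafify_unit[OF T] z yM]
        act_one[OF yM] act_none y by simp
  qed
  hence eq: "snd T (f (Some \<one>)) s = f None" if "s \<in> I" for s
    using sheafify_unit_eqD[OF T q z _ that] act_none by simp
  show ?thesis
  proof
    fix s assume s: "s \<in> I"
    have "f (if s \<in> J then None else Some s) = f None" using eq[OF s] act_one[OF ideal_carrier[OF s]] by simp
    thus "s \<in> J" using inj_onD[OF f _ _ none] ideal_carrier[OF s] by (auto simp: rees_def split: if_splits)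
  qed
qed

end

section \<open>The classification\<close>

unbundle cardinal_syntax

lemma exists_inj_pairing:
  assumes "infinite (UNIV :: 'u set)"
  shows "\<exists>pr :: 'u \<times> 'u \<Rightarrow> 'u. inj pr"
proof -
  have "|(UNIV::'u set) \<times> (UNIV::'u set)| \<le>o |UNIV::'u set|"
    by (rule ordIso_imp_ordLeq[OF card_of_Times_same_infinite[OF assms]])
  then obtain f :: "'u \<times> 'u \<Rightarrow> 'u" where "inj_on f (UNIV \<times> UNIV)"
    using card_of_ordLeq[THEN iffD2] by blast
  thus ?thesis by auto
qed

lemma exists_inj_on_finite:
  assumes "finite S" and "infinite (UNIV :: 'u set)"
  shows "\<exists>f :: 'a \<Rightarrow> 'u. inj_on f S"
proof -
  obtain g :: "nat \<Rightarrow> 'u" where g: "inj g" using infinite_countable_subset[OF assms(2)] by blast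
  obtain h :: "'a \<Rightarrow> nat" and n where "inj_on h S" using finite_imp_inj_to_nat_seg[OF assms(1)] by blast
  hence "inj_on (g \<circ> h) S" by (rule comp_inj_on[OF _ inj_on_subset[OF g subset_UNIV]])
  thus ?thesis by blast
qed

definition encode_list :: "('u \<times> 'u \<Rightarrow> 'u) \<Rightarrow> 'u \<Rightarrow> ('m \<times> 'm) list \<Rightarrow> ('m \<Rightarrow> 'm \<Rightarrow> 'u) \<Rightarrow> 'u" where
  "encode_list pr u0 xs \<Phi> = foldr (\<lambda>k acc. pr (\<Phi> (fst k) (snd k), acc)) xs u0"

lemma encode_list_eqD:
  assumes pr: "inj pr" and eq: "encode_list pr u0 xs \<Phi> = encode_list pr u0 xs \<Psi>"
    and k: "k \<in> set xs"
  shows "\<Phi> (fst k) (snd k) = \<Psi> (fst k) (snd k)"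
  using eq k by (induction xs) (auto simp: encode_list_def dest: injD[OF pr])

lemma exists_inj_on_twice_extensional:
  assumes fin: "finite I" and inf: "infinite (UNIV :: 'u set)"
  shows "\<exists>enc :: ('m \<Rightarrow> 'm \<Rightarrow> 'u) \<Rightarrow> 'u. inj_on enc {\<Phi>. \<Phi> \<in> extensional I \<and> (\<forall>s\<in>I. \<Phi> s \<in> extensional I)}"
proof -
  obtain pr :: "'u \<times> 'u \<Rightarrow> 'u" where pr: "inj pr" using exists_inj_pairing[OF inf] by blast
  obtain xs where xs: "set xs = I \<times> I" using finite_list[of "I \<times> I"] fin by blast
  have "inj_on (encode_list pr undefined xs) {\<Phi>. \<Phi> \<in> extensional I \<and> (\<forall>s\<in>I. \<Phi> s \<in> extensional I)}"
  proof (rule inj_onI)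
    fix \<Phi> \<Psi> assume "\<Phi> \<in> {\<Phi>. \<Phi> \<in> extensional I \<and> (\<forall>s\<in>I. \<Phi> s \<in> extensional I)}"
      and "\<Psi> \<in> {\<Phi>. \<Phi> \<in> extensional I \<and> (\<forall>s\<in>I. \<Phi> s \<in> extensional I)}"
      and e: "encode_list pr undefined xs \<Phi> = encode_list pr undefined xs \<Psi>"
    moreover have "\<Phi> s t = \<Psi> s t" if "s \<in> I" "t \<in> I" for s t
      using encode_list_eqD[OF pr e, of "(s, t)"] xs that by simp
    ultimately show "\<Phi> = \<Psi>"
      by (intro extensionalityI[of _ I]) (auto intro!: extensionalityI[of _ I])
  qed
  thus ?thesis by blast
qed

lemma Sh_in_Loc:
  fixes M :: "'m monoid"
  assumes M: "monoid M" and fin: "finite (carrier M)" and inf: "infinite (UNIV :: 'u set)"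
    and m: "m \<in> idem_ideals M"
  shows "(Sh M (topF M m) :: ('u,'m) mobj set) \<in> Loc M"
proof -
  interpret idempotent_ideal M m using M m unfolding idem_ideals_def idempotent_ideal_def
      idempotent_ideal_axioms_def by blast
  obtain enc :: "('m \<Rightarrow> 'm \<Rightarrow> 'u) \<Rightarrow> 'u"
    where "inj_on enc {\<Phi>. \<Phi> \<in> extensional m \<and> (\<forall>s\<in>m. \<Phi> s \<in> extensional m)}"
    using exists_inj_on_twice_extensional[OF finite_subset[OF _ fin] inf] ideal_carrier by blast
  moreover obtain emb :: "'m \<Rightarrow> 'u" where "inj_on emb (carrier M)"
    using exists_inj_on_finite[OF fin inf] by blast
  ultimately interpret sheafification M m enc emb by unfold_locales
  show ?thesis unfolding Loc_def using localising_Sh by simp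
qed

lemma idem_ideal_subset_of_Sh_eq:
  fixes M :: "'m monoid"
  assumes M: "monoid M" and fin: "finite (carrier M)" and inf: "infinite (UNIV :: 'u set)"
    and m1: "m1 \<in> idem_ideals M" and m2: "m2 \<in> idem_ideals M"
    and eq: "(Sh M (topF M m1) :: ('u,'m) mobj set) = Sh M (topF M m2)"
  shows "m1 \<subseteq> m2"
proof -
  interpret idempotent_ideal M m1 using M m1 unfolding idem_ideals_def idempotent_ideal_def
      idempotent_ideal_axioms_def by blast
  obtain enc :: "('m \<Rightarrow> 'm \<Rightarrow> 'u) \<Rightarrow> 'u"
    where "inj_on enc {\<Phi>. \<Phi> \<in> extensional m1 \<and> (\<forall>s\<in>m1. \<Phi> s \<in> extensional m1)}"
    using exists_inj_on_twice_extensional[OF finite_subset[OF _ fin] inf] ideal_carrier by blast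
  moreover obtain emb :: "'m \<Rightarrow> 'u" where "inj_on emb (carrier M)"
    using exists_inj_on_finite[OF fin inf] by blast
  ultimately interpret sheafification M m1 enc emb by unfold_locales
  obtain f :: "'m option \<Rightarrow> 'u" where "inj_on f (fst (rees M m2))"
    using exists_inj_on_finite[OF finite_rees[OF fin] inf] by blast
  moreover have "right_ideal M m2" using m2 unfolding idem_ideals_def two_sided_ideal_def by blast
  ultimately show ?thesis using ideal_subset_of_Sh_subset eq by blast
qed

lemma Loc_eq_Sh:
  fixes M :: "'m monoid" and L :: "('u,'m) mobj set"
  assumes M: "monoid M" and fin: "finite (carrier M)" and inf: "infinite (UNIV :: 'u set)"
    and L: "L \<in> Loc M"
  shows "\<exists>m\<in>idem_ideals M. L = Sh M (topF M m)"
proof -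
  obtain emb :: "'m \<Rightarrow> 'u" where "inj_on emb (carrier M)"
    using exists_inj_on_finite[OF fin inf] by blast
  moreover obtain pr :: "'u \<times> 'u \<Rightarrow> 'u" where "inj pr" using exists_inj_pairing[OF inf] by blast
  moreover obtain R \<eta> where "full_replete M L" "is_reflection M L R \<eta>"
    "\<forall>P p1 p2 A B C f g. is_pullback M P p1 p2 A B C f g \<longrightarrow>
       is_pullback M (R P) (refl_mor M R \<eta> P A p1) (refl_mor M R \<eta> P B p2)
         (R A) (R B) (R C) (refl_mor M R \<eta> A C f) (refl_mor M R \<eta> B C g)"
    using L unfolding Loc_def localising_def by blast
  ultimately have "localising_reflector M L R \<eta> emb pr"
    using M fin unfolding localising_reflector_def localising_reflector_axioms_def by blast
  then interpret localising_reflector M L R \<eta> emb pr .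
  show ?thesis using least_dense_idem_ideals L_eq_Sh by blast
qed

theorem bij_betw_idem_ideals_Loc:
  fixes M :: "'m monoid"
  assumes M: "monoid M" and fin: "finite (carrier M)" and inf: "infinite (UNIV :: 'u set)"
  shows "bij_betw (\<lambda>m. (Sh M (topF M m) :: ('u,'m) mobj set)) (idem_ideals M) (Loc M)"
  unfolding bij_betw_def
proof
  show "inj_on (\<lambda>m. (Sh M (topF M m) :: ('u,'m) mobj set)) (idem_ideals M)"
    using idem_ideal_subset_of_Sh_eq[OF M fin inf] by (intro inj_onI) (metis subset_antisym)
  show "(\<lambda>m. (Sh M (topF M m) :: ('u,'m) mobj set)) ` idem_ideals M = Loc M"
    using Sh_in_Loc[OF M fin inf] Loc_eq_Sh[OF M fin inf] by blast
qed

lemma opm_simps [simp]: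
  "carrier (opm M) = carrier M" "x \<otimes>\<^bsub>opm M\<^esub> y = y \<otimes>\<^bsub>M\<^esub> x" "\<one>\<^bsub>opm M\<^esub> = \<one>\<^bsub>M\<^esub>"
  by (simp_all add: opm_def)

lemma monoid_opm: "monoid M \<Longrightarrow> monoid (opm M)"
  unfolding monoid_def by (simp add: opm_def)

lemma idem_ideals_opm: "idem_ideals (opm M) = idem_ideals M"
proof -
  have "two_sided_ideal (opm M) a \<longleftrightarrow> two_sided_ideal M a" for a
    unfolding two_sided_ideal_def right_ideal_def by auto
  moreover have "{y \<otimes>\<^bsub>M\<^esub> x | x y. x \<in> a \<and> y \<in> a} = {x \<otimes>\<^bsub>M\<^esub> y | x y. x \<in> a \<and> y \<in> a}" for a
    by blast
  ultimately show ?thesis unfolding idem_ideals_def by simp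
qed

lemma finite_idem_ideals: "finite (carrier M) \<Longrightarrow> finite (idem_ideals M)"
  by (rule finite_subset[of _ "Pow (carrier M)"])
     (auto simp: idem_ideals_def two_sided_ideal_def right_ideal_def)

theorem mainTheorem15:
  fixes M :: "'m monoid"
  assumes "monoid M" and "finite (carrier M)" and "infinite (UNIV :: 'u set)"
  shows "bij_betw (\<lambda>m. (Sh M (topF M m) :: ('u,'m) mobj set)) (idem_ideals M) (Loc M)
         \<and> finite (Loc M :: ('u,'m) mobj set set)
         \<and> card (Loc M :: ('u,'m) mobj set set) = card (Loc (opm M) :: ('u,'m) mobj set set)"
proof -
  have bij: "bij_betw (\<lambda>m. (Sh M (topF M m) :: ('u,'m) mobj set)) (idem_ideals M) (Loc M)"
    using bij_betw_idem_ideals_Loc[OF assms] .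
  have bij_op: "bij_betw (\<lambda>m. (Sh (opm M) (topF (opm M) m) :: ('u,'m) mobj set))
      (idem_ideals M) (Loc (opm M))"
    using bij_betw_idem_ideals_Loc[OF monoid_opm[OF assms(1)] _ assms(3)] assms(2)
    by (simp add: idem_ideals_opm)
  show ?thesis
    using bij bij_betw_finite[OF bij] finite_idem_ideals[OF assms(2)]
      bij_betw_same_card[OF bij] bij_betw_same_card[OF bij_op] by simp
qed

end
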